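(* Let $\mathcal{A}$ be a real invertible $d\times d$ matrix and let $f\in L^2(\mathbb{R}^d)$, $f\neq0$, have compact support. Then: (i) $\tau_{\mathcal{A}}(f)=\{T_{\mathcal{A}k}f\}_{k\in\mathbb{Z}^d}$ is a Bessel sequence; (ii) $\tau_{\mathcal{A}}(f)$ cannot be an overcomplete frame sequence: if $\tau_{\mathcal{A}}(f)$ is a frame sequence, then it is a Riesz sequence, i.e. a Riesz basis (exact frame) for $\overline{\operatorname{span}}\,\tau_{\mathcal{A}}(f)$.
   Context: $T_yf(x)=f(x-y)$. A frame sequence is a sequence that is a frame for its closed linear span; it is overcomplete if it remains a frame for that span after deleting some single element. A Riesz sequence $\{g_k\}$ satisfies $A\sum|c_k|^2\le\|\sum c_kg_k\|^2\le B\sum|c_k|^2$ for some $A,B>0$ and all finitely supported $\{c_k\}$. *)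

theory Defs
  imports "HOL-Analysis.Analysis"
begin

text \<open>Elements of L2 are represented by (Borel measurable, square integrable)
  complex-valued functions on a Euclidean space with Lebesgue-Borel measure.\<close>

definition L2 :: "('a::euclidean_space \<Rightarrow> complex) set" where
  "L2 = {h. h \<in> borel_measurable lborel \<and> integrable lborel (\<lambda>x. (cmod (h x))\<^sup>2)}"

definition l2ip :: "('a::euclidean_space \<Rightarrow> complex) \<Rightarrow> ('a \<Rightarrow> complex) \<Rightarrow> complex" where
  "l2ip h g = (LINT x|lborel. h x * cnj (g x))"

definition l2norm :: "('a::euclidean_space \<Rightarrow> complex) \<Rightarrow> real" where
  "l2norm h = sqrt (LINT x|lborel. (cmod (h x))\<^sup>2)"

definition transl :: "'a::euclidean_space \<Rightarrow> ('a \<Rightarrow> complex) \<Rightarrow> ('a \<Rightarrow> complex)" where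
  "transl y f = (\<lambda>x. f (x - y))"

definition closed_span :: "('i \<Rightarrow> 'a::euclidean_space \<Rightarrow> complex) \<Rightarrow> 'i set \<Rightarrow> ('a \<Rightarrow> complex) set" where
  "closed_span g I = {h \<in> L2. \<forall>e>0. \<exists>F c. finite F \<and> F \<subseteq> I \<and>
      l2norm (\<lambda>x. h x - (\<Sum>k\<in>F. c k * g k x)) < e}"

definition bessel_seq :: "('i \<Rightarrow> 'a::euclidean_space \<Rightarrow> complex) \<Rightarrow> 'i set \<Rightarrow> bool" where
  "bessel_seq g I \<longleftrightarrow> (\<forall>k\<in>I. g k \<in> L2) \<and>
     (\<exists>B. \<forall>h\<in>L2. (\<lambda>k. (cmod (l2ip h (g k)))\<^sup>2) summable_on I \<and>
        (\<Sum>\<^sub>\<infinity>k\<in>I. (cmod (l2ip h (g k)))\<^sup>2) \<le> B * (l2norm h)\<^sup>2)"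

definition frame_for :: "('i \<Rightarrow> 'a::euclidean_space \<Rightarrow> complex) \<Rightarrow> 'i set \<Rightarrow> ('a \<Rightarrow> complex) set \<Rightarrow> bool" where
  "frame_for g I S \<longleftrightarrow> (\<exists>A B. A > 0 \<and> B > 0 \<and> (\<forall>h\<in>S.
      (\<lambda>k. (cmod (l2ip h (g k)))\<^sup>2) summable_on I \<and>
      A * (l2norm h)\<^sup>2 \<le> (\<Sum>\<^sub>\<infinity>k\<in>I. (cmod (l2ip h (g k)))\<^sup>2) \<and>
      (\<Sum>\<^sub>\<infinity>k\<in>I. (cmod (l2ip h (g k)))\<^sup>2) \<le> B * (l2norm h)\<^sup>2))"

definition frame_seq :: "('i \<Rightarrow> 'a::euclidean_space \<Rightarrow> complex) \<Rightarrow> 'i set \<Rightarrow> bool" where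
  "frame_seq g I \<longleftrightarrow> (\<forall>k\<in>I. g k \<in> L2) \<and> frame_for g I (closed_span g I)"

definition overcomplete_frame_seq :: "('i \<Rightarrow> 'a::euclidean_space \<Rightarrow> complex) \<Rightarrow> 'i set \<Rightarrow> bool" where
  "overcomplete_frame_seq g I \<longleftrightarrow> frame_seq g I \<and>
     (\<exists>j\<in>I. frame_for g (I - {j}) (closed_span g I))"

definition riesz_seq :: "('i \<Rightarrow> 'a::euclidean_space \<Rightarrow> complex) \<Rightarrow> 'i set \<Rightarrow> bool" where
  "riesz_seq g I \<longleftrightarrow> (\<forall>k\<in>I. g k \<in> L2) \<and> (\<exists>A B. A > 0 \<and> B > 0 \<and>
     (\<forall>F c. finite F \<and> F \<subseteq> I \<longrightarrow>
        A * (\<Sum>k\<in>F. (cmod (c k))\<^sup>2) \<le> (l2norm (\<lambda>x. \<Sum>k\<in>F. c k * g k x))\<^sup>2 \<and>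
        (l2norm (\<lambda>x. \<Sum>k\<in>F. c k * g k x))\<^sup>2 \<le> B * (\<Sum>k\<in>F. (cmod (c k))\<^sup>2)))"

end

theory Submission
  imports Defs
begin

text \<open>Since \<open>f\<close> has compact support, the Gram sequence \<open>a m = \<langle>T\<^sub>A\<^sub>m f, f\<rangle>\<close> is finitely
  supported, so the Gram matrix of the translates is a banded Toeplitz matrix whose symbol \<open>p\<close>
  is a real trigonometric polynomial. Bounded overlap of the translated supports gives the
  Bessel bound. A discrete Parseval identity on a fine grid shows that \<open>\<parallel>\<Sum> c\<^sub>k T\<^sub>A\<^sub>k f\<parallel>\<^sup>2\<close>
  lies between \<open>(inf p) \<parallel>c\<parallel>\<^sup>2\<close> and \<open>(sup p) \<parallel>c\<parallel>\<^sup>2\<close>. A lower frame bound \<open>b\<close>, tested on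
  plane waves over large cubes, forces \<open>b p \<le> p\<^sup>2\<close>; as \<open>p\<close> is continuous and positive somewhere,
  \<open>p \<ge> b\<close> everywhere, which yields the Riesz bounds. With \<open>p \<ge> b\<close>, truncated Neumann series of
  the Gram matrix produce combinations nearly biorthogonal to a single translate, so deleting
  that translate destroys the lower frame bound.\<close>

definition cube :: "nat \<Rightarrow> (int^'n) set" where
  "cube N = {k. \<forall>i. \<bar>k$i\<bar> \<le> int N}"

definition grid :: "nat \<Rightarrow> (nat^'n) set" where
  "grid L = {t. \<forall>i. t$i < L}"

definition grid_point :: "nat \<Rightarrow> nat^'n \<Rightarrow> real^'n" where
  "grid_point L t = (\<chi> i. real (t$i) / real L)"

definition of_int_vec :: "int^'n \<Rightarrow> real^'n" where
  "of_int_vec k = (\<chi> i. of_int (k$i))"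

lemma vec_set_eq_image_PiE: "{k::'b^'n. \<forall>i. k$i \<in> S i} = vec_lambda ` (PiE UNIV S)"
proof (intro set_eqI iffI)
  fix k :: "'b^'n" assume "k \<in> {k. \<forall>i. k$i \<in> S i}"
  then have "vec_nth k \<in> PiE UNIV S" by auto
  moreover have "k = vec_lambda (vec_nth k)" by simp
  ultimately show "k \<in> vec_lambda ` (PiE UNIV S)" by blast
qed auto

lemma inj_on_vec_lambda: "inj_on (vec_lambda :: ('n::finite \<Rightarrow> 'b) \<Rightarrow> 'b^'n) A"
  by (rule inj_onI) (metis vec_lambda_inverse UNIV_I)

lemma finite_vec_set: "(\<And>i. finite (S i)) \<Longrightarrow> finite {k::'b^'n. \<forall>i. k$i \<in> S i}"
  unfolding vec_set_eq_image_PiE by (intro finite_imageI finite_PiE) auto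

lemma card_vec_set:
  "(\<And>i. finite (S i)) \<Longrightarrow> card {k::'b^'n. \<forall>i. k$i \<in> S i} = (\<Prod>i\<in>UNIV. card (S i))"
  unfolding vec_set_eq_image_PiE by (subst card_image[OF inj_on_vec_lambda]) (simp add: card_PiE)

lemma sum_prod_vec_set:
  fixes h :: "'n::finite \<Rightarrow> 'b \<Rightarrow> 'c::comm_semiring_1"
  assumes "\<And>i. finite (S i)"
  shows "(\<Sum>k\<in>{k::'b^'n. \<forall>i. k$i \<in> S i}. \<Prod>i\<in>UNIV. h i (k$i)) = (\<Prod>i\<in>UNIV. \<Sum>y\<in>S i. h i y)"
  unfolding vec_set_eq_image_PiE
  by (subst sum.reindex[OF inj_on_vec_lambda]) (simp add: prod_sum_PiE assms)

lemma cube_eq_vec_set: "cube N = {k::int^'n. \<forall>i. k$i \<in> {- int N..int N}}"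
  by (auto simp: cube_def abs_le_iff) (metis minus_le_iff)+

lemma finite_cube [simp]: "finite (cube N)"
  unfolding cube_eq_vec_set by (rule finite_vec_set) simp

lemma card_cube: "card (cube N :: (int^'n) set) = (2*N+1) ^ CARD('n)"
  unfolding cube_eq_vec_set by (subst card_vec_set) (simp_all add: nat_add_distrib nat_mult_distrib)

lemma zero_in_cube [simp]: "0 \<in> cube N"
  by (simp add: cube_def)

lemma cube_mono: "N \<le> N' \<Longrightarrow> cube N \<subseteq> cube N'"
  by (auto simp: cube_def) (meson dual_order.trans of_nat_le_iff)

lemma diff_in_cube: "j \<in> cube N \<Longrightarrow> m \<in> cube R \<Longrightarrow> j - m \<in> cube (N + R)"
  by (auto simp: cube_def abs_le_iff) (smt (verit))+

lemma uminus_in_cube: "m \<in> cube R \<Longrightarrow> - m \<in> cube R"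
  by (auto simp: cube_def)

lemma uminus_image_cube: "uminus ` cube R = cube R"
  using uminus_in_cube by (auto intro: image_eqI[where x="- _"])

lemma finite_subset_cube: "finite F \<Longrightarrow> \<exists>N. F \<subseteq> cube N"
proof (induction F rule: finite_induct)
  case (insert k F)
  then obtain N where N: "F \<subseteq> cube N" by blast
  define M where "M = (\<Sum>i\<in>UNIV. nat \<bar>k$i\<bar>)"
  have "\<bar>k$i\<bar> \<le> int M" for i
  proof -
    have "nat \<bar>k$i\<bar> \<le> M" unfolding M_def by (rule member_le_sum) auto
    then show ?thesis by linarith
  qed
  then have "k \<in> cube M" by (simp add: cube_def)
  then have "insert k F \<subseteq> cube (max N M)"
    using N cube_mono[of N "max N M"] cube_mono[of M "max N M"] by auto
  then show ?case by blast
qed simp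

lemma sum_cube_reindex_diff:
  fixes g :: "int^'n \<Rightarrow> 'b::comm_monoid_add"
  assumes j: "j \<in> cube N" and vanish: "\<And>m. m \<notin> cube R \<Longrightarrow> g (j - m) = 0"
  shows "(\<Sum>k\<in>cube (N + R). g k) = (\<Sum>m\<in>cube R. g (j - m))"
proof -
  have inj: "inj_on (\<lambda>m. j - m) (cube R)" by (rule inj_onI) simp
  have sub: "(\<lambda>m. j - m) ` cube R \<subseteq> cube (N + R)" using diff_in_cube[OF j] by auto
  have "g k = 0" if "k \<in> cube (N + R) - (\<lambda>m. j - m) ` cube R" for k
  proof -
    have "j - k \<notin> cube R" using that by (auto intro: image_eqI[where x="j - k"])
    then show ?thesis using vanish[of "j - k"] by simp
  qed
  then have "(\<Sum>k\<in>cube (N + R). g k) = (\<Sum>k\<in>(\<lambda>m. j - m) ` cube R. g k)"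
    by (intro sum.mono_neutral_right[OF finite_cube sub]) auto
  also have "\<dots> = (\<Sum>m\<in>cube R. g (j - m))" by (rule sum.reindex[OF inj, unfolded comp_def])
  finally show ?thesis .
qed

lemma sum_cube_reindex_add:
  fixes g :: "int^'n \<Rightarrow> 'b::comm_monoid_add"
  assumes k: "k \<in> cube N" and vanish: "\<And>m. m \<notin> cube R \<Longrightarrow> g (k + m) = 0"
  shows "(\<Sum>j\<in>cube (N + R). g j) = (\<Sum>m\<in>cube R. g (k + m))"
proof -
  have "(\<Sum>j\<in>cube (N + R). g j) = (\<Sum>m\<in>cube R. g (k - m))"
    by (rule sum_cube_reindex_diff[OF k]) (metis diff_conv_add_uminus uminus_in_cube minus_minus vanish)
  also have "\<dots> = (\<Sum>m\<in>uminus ` cube R. g (k + m))"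
    by (subst sum.reindex) (auto intro: inj_onI)
  finally show ?thesis by (simp only: uminus_image_cube)
qed

lemma grid_eq_vec_set: "grid L = {t::nat^'n. \<forall>i. t$i \<in> {..<L}}"
  by (simp add: grid_def)

lemma card_grid: "card (grid L :: (nat^'n) set) = L ^ CARD('n)"
  unfolding grid_eq_vec_set by (subst card_vec_set) auto

lemma of_int_vec_zero [simp]: "of_int_vec 0 = 0"
  by (simp add: of_int_vec_def vec_eq_iff)

lemma of_int_vec_add: "of_int_vec (m + k) = of_int_vec m + of_int_vec k"
  by (simp add: of_int_vec_def vec_eq_iff)

lemma of_int_vec_diff: "of_int_vec (m - k) = of_int_vec m - of_int_vec k"
  by (simp add: of_int_vec_def vec_eq_iff)

lemma of_int_vec_uminus: "of_int_vec (- m) = - of_int_vec m"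
  by (simp add: of_int_vec_def vec_eq_iff)

lemma inner_of_int_vec_grid_point:
  "of_int_vec m \<bullet> grid_point L t = (\<Sum>i\<in>UNIV. real_of_int (m$i) * real (t$i) / real L)"
  by (simp add: inner_vec_def of_int_vec_def grid_point_def)


definition e2pi :: "real \<Rightarrow> complex" where
  "e2pi x = cis (2*pi*x)"

lemma e2pi_add: "e2pi (x + y) = e2pi x * e2pi y"
  by (simp add: e2pi_def cis_mult distrib_left)

lemma e2pi_minus: "e2pi (- x) = cnj (e2pi x)"
  by (simp add: e2pi_def cis_cnj)

lemma e2pi_diff: "e2pi (x - y) = e2pi x * cnj (e2pi y)"
  by (simp add: e2pi_def cis_cnj cis_mult right_diff_distrib)

lemma norm_e2pi [simp]: "norm (e2pi x) = 1"
  by (simp add: e2pi_def)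

lemma e2pi_zero [simp]: "e2pi 0 = 1"
  by (simp add: e2pi_def)

lemma e2pi_mult_cnj: "e2pi x * cnj (e2pi x) = 1"
  by (metis e2pi_diff e2pi_zero diff_self)

lemma e2pi_sum: "finite I \<Longrightarrow> e2pi (\<Sum>i\<in>I. f i) = (\<Prod>i\<in>I. e2pi (f i))"
  by (induction I rule: finite_induct) (simp_all add: e2pi_add)

lemma e2pi_power: "e2pi x ^ n = e2pi (real n * x)"
proof -
  have "e2pi x ^ n = cis (real n * (2*pi*x))" unfolding e2pi_def by (rule Complex.DeMoivre)
  then show ?thesis by (simp add: e2pi_def ac_simps)
qed

lemma sum_e2pi_multiples:
  fixes m :: int and L :: nat
  assumes L: "0 < L" and m: "\<bar>m\<bar> < int L"
  shows "(\<Sum>s<L. e2pi (real_of_int m * real s / real L)) = (if m = 0 then of_nat L else 0)"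
proof (cases "m = 0")
  case False
  define z where "z = e2pi (real_of_int m / real L)"
  have powers: "e2pi (real_of_int m * real s / real L) = z ^ s" for s
    by (simp add: z_def e2pi_power ac_simps)
  have "z \<noteq> 1"
  proof
    assume "z = 1"
    then have "cos (2*pi*(real_of_int m / real L)) = 1"
      unfolding z_def e2pi_def by (metis cis.sel(1) one_complex.sel(1))
    then obtain n :: int where "2*pi*(real_of_int m / real L) = real_of_int n * 2 * pi"
      using cos_one_2pi_int by blast
    then have "real_of_int m = real_of_int n * real L" using L by (simp add: field_simps)
    then have "m = n * int L" by (metis of_int_eq_iff of_int_mult of_int_of_nat_eq)
    with False m show False
      by (metis abs_mult abs_of_nat less_le_not_le mult_le_cancel_right1 of_nat_0_le_iff
          abs_ge_zero mult_eq_0_iff not_one_le_zero zero_less_abs_iff linorder_not_le int_one_le_iff_zero_less)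
  qed
  moreover have "z ^ L = 1"
  proof -
    have "z ^ L = e2pi (real_of_int m)" using L by (simp add: z_def e2pi_power)
    then show ?thesis by (simp add: e2pi_def)
  qed
  ultimately show ?thesis using False powers by (simp add: geometric_sum)
qed simp

lemma sum_grid_e2pi:
  fixes m :: "int^'n" and L :: nat
  assumes L: "0 < L" and m: "\<And>i. \<bar>m$i\<bar> < int L"
  shows "(\<Sum>t\<in>grid L. e2pi (of_int_vec m \<bullet> grid_point L t)) = (if m = 0 then of_nat L ^ CARD('n) else 0)"
proof -
  have "(\<Sum>t\<in>grid L. e2pi (of_int_vec m \<bullet> grid_point L t))
      = (\<Sum>t\<in>grid L. \<Prod>i\<in>UNIV. e2pi (real_of_int (m$i) * real (t$i) / real L))"
    by (simp add: inner_of_int_vec_grid_point e2pi_sum)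
  also have "\<dots> = (\<Prod>i\<in>UNIV. \<Sum>s<L. e2pi (real_of_int (m$i) * real s / real L))"
    unfolding grid_eq_vec_set by (rule sum_prod_vec_set) auto
  also have "\<dots> = (\<Prod>i\<in>UNIV. if m$i = 0 then of_nat L else 0)"
    by (simp add: sum_e2pi_multiples[OF L m])
  also have "\<dots> = (if m = 0 then of_nat L ^ CARD('n) else 0)"
  proof (cases "m = 0")
    case False
    then obtain i where "m$i \<noteq> 0" by (metis vec_eq_iff zero_index)
    then show ?thesis using False by (subst prod_zero) auto
  qed simp
  finally show ?thesis .
qed

definition fourier :: "(int^'n) set \<Rightarrow> (int^'n \<Rightarrow> complex) \<Rightarrow> real^'n \<Rightarrow> complex" where
  "fourier F c x = (\<Sum>j\<in>F. c j * e2pi (- (of_int_vec j \<bullet> x)))"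

definition symbol :: "nat \<Rightarrow> (int^'n \<Rightarrow> complex) \<Rightarrow> real^'n \<Rightarrow> complex" where
  "symbol R a x = (\<Sum>m\<in>cube R. a m * e2pi (of_int_vec m \<bullet> x))"

text \<open>For the Gram sequence \<open>a m = \<langle>g\<^sub>m, g\<^sub>0\<rangle>\<close> of shift-invariant vectors \<open>g\<^sub>k\<close>,
  \<open>gram_form F c a\<close> is \<open>\<parallel>\<Sum>\<^sub>j c\<^sub>j g\<^sub>j\<parallel>\<^sup>2\<close> and \<open>gram_apply F c a k\<close> is \<open>\<langle>\<Sum>\<^sub>j c\<^sub>j g\<^sub>j, g\<^sub>k\<rangle>\<close>.\<close>

definition gram_form :: "(int^'n) set \<Rightarrow> (int^'n \<Rightarrow> complex) \<Rightarrow> (int^'n \<Rightarrow> complex) \<Rightarrow> complex" where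
  "gram_form F c a = (\<Sum>j\<in>F. \<Sum>k\<in>F. c j * cnj (c k) * a (j - k))"

definition gram_apply :: "(int^'n) set \<Rightarrow> (int^'n \<Rightarrow> complex) \<Rightarrow> (int^'n \<Rightarrow> complex) \<Rightarrow> int^'n \<Rightarrow> complex" where
  "gram_apply F c a k = (\<Sum>j\<in>F. c j * a (j - k))"

lemma gram_form_eq_sum_gram_apply: "gram_form F c a = (\<Sum>k\<in>F. cnj (c k) * gram_apply F c a k)"
  unfolding gram_form_def gram_apply_def sum_distrib_left
  by (subst sum.swap) (simp add: mult_ac)

lemma gram_apply_outside_cube:
  assumes F: "F \<subseteq> cube N" and supp: "\<And>m. m \<notin> cube R \<Longrightarrow> a m = 0" and k: "k \<notin> cube (N + R)"
  shows "gram_apply F c a k = 0"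
  unfolding gram_apply_def
proof (intro sum.neutral ballI)
  fix j assume "j \<in> F"
  then have "j - k \<notin> cube R"
    using F k diff_in_cube[of j N "j - k" R] by auto
  then show "c j * a (j - k) = 0" using supp by simp
qed

lemma fourier_extend:
  assumes "F \<subseteq> F'" "finite F'" "\<And>k. k \<in> F' - F \<Longrightarrow> c k = 0"
  shows "fourier F' c x = fourier F c x"
  unfolding fourier_def using assms by (intro sum.mono_neutral_right) auto

lemma gram_apply_extend:
  assumes "F \<subseteq> F'" "finite F'" "\<And>k. k \<in> F' - F \<Longrightarrow> c k = 0"
  shows "gram_apply F' c a k = gram_apply F c a k"
  unfolding gram_apply_def using assms by (intro sum.mono_neutral_right) auto

lemma fourier_diff_divide: "fourier F (\<lambda>k. c k - d k / s) x = fourier F c x - fourier F d x / s"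
  unfolding fourier_def by (simp add: sum_subtractf sum_divide_distrib algebra_simps)

lemma fourier_gram_apply:
  assumes F: "F \<subseteq> cube N" and supp: "\<And>m. m \<notin> cube R \<Longrightarrow> a m = 0"
  shows "fourier (cube (N + R)) (gram_apply F c a) x = fourier F c x * symbol R a x"
proof -
  have "fourier (cube (N + R)) (gram_apply F c a) x
      = (\<Sum>j\<in>F. c j * (\<Sum>k\<in>cube (N + R). a (j - k) * e2pi (- (of_int_vec k \<bullet> x))))"
    unfolding fourier_def gram_apply_def sum_distrib_right sum_distrib_left mult.assoc
    by (rule sum.swap)
  also have "\<dots> = (\<Sum>j\<in>F. c j * (\<Sum>m\<in>cube R. a m * e2pi (- (of_int_vec (j - m) \<bullet> x))))"
  proof (rule sum.cong[OF refl])
    fix j assume "j \<in> F"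
    then have j: "j \<in> cube N" using F by auto
    show "c j * (\<Sum>k\<in>cube (N + R). a (j - k) * e2pi (- (of_int_vec k \<bullet> x)))
        = c j * (\<Sum>m\<in>cube R. a m * e2pi (- (of_int_vec (j - m) \<bullet> x)))"
      by (subst sum_cube_reindex_diff[OF j]) (simp_all add: supp)
  qed
  also have "\<dots> = (\<Sum>j\<in>F. \<Sum>m\<in>cube R. c j * e2pi (- (of_int_vec j \<bullet> x)) * (a m * e2pi (of_int_vec m \<bullet> x)))"
    by (simp add: sum_distrib_left of_int_vec_diff inner_diff_left e2pi_add[symmetric] mult_ac)
  also have "\<dots> = fourier F c x * symbol R a x"
    unfolding fourier_def symbol_def by (rule sum_product[symmetric])
  finally show ?thesis .
qed

lemma symbol_real:
  assumes herm: "\<And>m. a (- m) = cnj (a m)"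
  shows "symbol R a x = complex_of_real (Re (symbol R a x))"
proof -
  have inj: "inj_on uminus (cube R :: (int^'n) set)" by (rule inj_onI) simp
  have "cnj (symbol R a x) = (\<Sum>m\<in>cube R. a (- m) * e2pi (of_int_vec (- m) \<bullet> x))"
    unfolding symbol_def cnj_sum
    by (intro sum.cong refl) (simp add: herm of_int_vec_uminus e2pi_minus)
  also have "\<dots> = (\<Sum>m\<in>uminus ` cube R. a m * e2pi (of_int_vec m \<bullet> x))"
    by (rule sum.reindex[OF inj, unfolded comp_def, symmetric])
  finally have "cnj (symbol R a x) = symbol R a x" by (simp add: uminus_image_cube symbol_def)
  then show ?thesis by (simp add: complex_eq_iff)
qed

lemma norm_symbol:
  assumes herm: "\<And>m. a (- m) = cnj (a m)"
  shows "cmod (symbol R a x) = \<bar>Re (symbol R a x)\<bar>"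
  by (metis norm_of_real symbol_real[where a=a, OF herm])

lemma symbol_le_l1_norm: "Re (symbol R a x) \<le> (\<Sum>m\<in>cube R. cmod (a m))"
proof -
  have "Re (symbol R a x) \<le> cmod (symbol R a x)" by (rule complex_Re_le_cmod)
  also have "\<dots> \<le> (\<Sum>m\<in>cube R. cmod (a m * e2pi (of_int_vec m \<bullet> x)))"
    unfolding symbol_def by (rule norm_sum)
  finally show ?thesis by (simp add: norm_mult)
qed

lemma continuous_on_symbol: "continuous_on UNIV (\<lambda>x. Re (symbol R a x))"
  unfolding symbol_def e2pi_def cis_conv_exp by (intro continuous_intros)


section \<open>Discrete Parseval identities on the sampling grid\<close>

lemma symbol_mult_norm_fourier:
  "symbol R a x * (fourier F c x * cnj (fourier F c x)) =
     (\<Sum>m\<in>cube R. \<Sum>j\<in>F. \<Sum>k\<in>F. a m * c j * cnj (c k) * e2pi (of_int_vec (m - j + k) \<bullet> x))"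
proof -
  have norm_sq: "fourier F c x * cnj (fourier F c x) =
      (\<Sum>j\<in>F. \<Sum>k\<in>F. c j * cnj (c k) * e2pi (of_int_vec k \<bullet> x - of_int_vec j \<bullet> x))"
    unfolding fourier_def cnj_sum sum_product
    by (intro sum.cong refl) (simp add: e2pi_diff e2pi_minus mult_ac)
  show ?thesis
    unfolding symbol_def norm_sq sum_distrib_right unfolding sum_distrib_left
    by (intro sum.cong refl)
      (simp add: of_int_vec_add of_int_vec_diff inner_add_left inner_diff_left e2pi_add e2pi_diff mult_ac)
qed

text \<open>Sampling on a grid with \<open>L > 2N + R\<close> points per axis sees no aliasing: only the
  frequencies \<open>m = j - k\<close> survive the orthogonality relation.\<close>

lemma sum_grid_symbol_mult_norm_fourier:
  fixes F :: "(int^'n) set"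
  assumes F: "F \<subseteq> cube N" and supp: "\<And>m. m \<notin> cube R \<Longrightarrow> a m = 0" and L: "2*N + R < L"
  shows "(\<Sum>t\<in>grid L. symbol R a (grid_point L t) *
            (fourier F c (grid_point L t) * cnj (fourier F c (grid_point L t))))
        = of_nat L ^ CARD('n) * gram_form F c a"
proof -
  let ?P = "of_nat L ^ CARD('n) :: complex"
  have orth: "(\<Sum>t\<in>grid L. e2pi (of_int_vec (m - j + k) \<bullet> grid_point L t)) = (if m = j - k then ?P else 0)"
    if "m \<in> cube R" "j \<in> F" "k \<in> F" for m j k
  proof -
    have "\<bar>(m - j + k)$i\<bar> < int L" for i
    proof -
      have "\<bar>m$i\<bar> \<le> int R" "\<bar>j$i\<bar> \<le> int N" "\<bar>k$i\<bar> \<le> int N"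
        using that F by (auto simp: cube_def)
      then show ?thesis using L by simp
    qed
    moreover have "(m - j + k = 0) = (m = j - k)" by (auto simp: algebra_simps)
    ultimately show ?thesis using L by (subst sum_grid_e2pi) auto
  qed
  have "(\<Sum>t\<in>grid L. symbol R a (grid_point L t) *
            (fourier F c (grid_point L t) * cnj (fourier F c (grid_point L t))))
      = (\<Sum>m\<in>cube R. \<Sum>j\<in>F. \<Sum>k\<in>F. a m * c j * cnj (c k) *
            (\<Sum>t\<in>grid L. e2pi (of_int_vec (m - j + k) \<bullet> grid_point L t)))"
    unfolding symbol_mult_norm_fourier sum_distrib_left
    by (subst sum.swap, rule sum.cong[OF refl], subst sum.swap, rule sum.cong[OF refl],
        subst sum.swap, rule refl)
  also have "\<dots> = (\<Sum>m\<in>cube R. \<Sum>j\<in>F. \<Sum>k\<in>F. if m = j - k then a m * c j * cnj (c k) * ?P else 0)"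
    by (intro sum.cong refl) (simp add: orth)
  also have "\<dots> = (\<Sum>j\<in>F. \<Sum>k\<in>F. \<Sum>m\<in>cube R. if m = j - k then a m * c j * cnj (c k) * ?P else 0)"
    by (subst sum.swap, rule sum.cong[OF refl], subst sum.swap, rule refl)
  also have "\<dots> = (\<Sum>j\<in>F. \<Sum>k\<in>F. ?P * (c j * cnj (c k) * a (j - k)))"
    by (intro sum.cong refl) (use supp in \<open>auto simp: mult_ac\<close>)
  also have "\<dots> = ?P * gram_form F c a"
    by (simp add: gram_form_def sum_distrib_left)
  finally show ?thesis .
qed

lemma sum_grid_norm_fourier:
  fixes F :: "(int^'n) set"
  assumes F: "F \<subseteq> cube N" and L: "2*N < L"
  shows "(\<Sum>t\<in>grid L. (cmod (fourier F c (grid_point L t)))\<^sup>2) = real L ^ CARD('n) * (\<Sum>k\<in>F. (cmod (c k))\<^sup>2)"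
proof -
  define \<delta> :: "int^'n \<Rightarrow> complex" where "\<delta> m = (if m = 0 then 1 else 0)" for m
  have symbol_\<delta>: "symbol 0 \<delta> x = 1" for x
  proof -
    have "symbol 0 \<delta> x = (\<Sum>m\<in>cube 0. if m = 0 then e2pi (of_int_vec m \<bullet> x) else 0)"
      unfolding symbol_def \<delta>_def by (intro sum.cong) auto
    then show ?thesis by simp
  qed
  have "finite F" using finite_subset[OF F finite_cube] .
  then have gram_form_\<delta>: "gram_form F c \<delta> = (\<Sum>k\<in>F. c k * cnj (c k))"
    unfolding gram_form_def \<delta>_def by (intro sum.cong refl) (simp add: if_distrib cong: if_cong)
  have "complex_of_real (\<Sum>t\<in>grid L. (cmod (fourier F c (grid_point L t)))\<^sup>2)
      = (\<Sum>t\<in>grid L. symbol 0 \<delta> (grid_point L t) *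
          (fourier F c (grid_point L t) * cnj (fourier F c (grid_point L t))))"
    by (simp add: symbol_\<delta> complex_norm_square[symmetric])
  also have "\<dots> = of_nat L ^ CARD('n) * gram_form F c \<delta>"
    using L by (intro sum_grid_symbol_mult_norm_fourier[OF F]) (auto simp: \<delta>_def)
  also have "\<dots> = complex_of_real (real L ^ CARD('n) * (\<Sum>k\<in>F. (cmod (c k))\<^sup>2))"
    by (simp add: gram_form_\<delta> complex_norm_square[symmetric])
  finally show ?thesis by (simp only: of_real_eq_iff)
qed

lemma sum_grid_symbol_norm_fourier:
  fixes F :: "(int^'n) set"
  assumes F: "F \<subseteq> cube N" and supp: "\<And>m. m \<notin> cube R \<Longrightarrow> a m = 0"
    and herm: "\<And>m. a (-m) = cnj (a m)" and L: "2*N + R < L"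
  shows "(\<Sum>t\<in>grid L. Re (symbol R a (grid_point L t)) * (cmod (fourier F c (grid_point L t)))\<^sup>2)
       = real L ^ CARD('n) * Re (gram_form F c a)"
proof -
  have "complex_of_real (\<Sum>t\<in>grid L. Re (symbol R a (grid_point L t)) * (cmod (fourier F c (grid_point L t)))\<^sup>2)
      = (\<Sum>t\<in>grid L. symbol R a (grid_point L t) *
            (fourier F c (grid_point L t) * cnj (fourier F c (grid_point L t))))"
    by (simp add: complex_norm_square[symmetric] symbol_real[where a=a, OF herm, symmetric])
  also have "\<dots> = of_nat L ^ CARD('n) * gram_form F c a"
    by (rule sum_grid_symbol_mult_norm_fourier[OF F supp L])
  finally have "complex_of_real (\<Sum>t\<in>grid L. Re (symbol R a (grid_point L t)) * (cmod (fourier F c (grid_point L t)))\<^sup>2)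
      = of_nat L ^ CARD('n) * gram_form F c a" .
  from arg_cong[OF this, of Re] show ?thesis by simp
qed

lemma gram_form_bounds:
  fixes F :: "(int^'n) set"
  assumes supp: "\<And>m. m \<notin> cube R \<Longrightarrow> a m = 0" and herm: "\<And>m. a (-m) = cnj (a m)"
    and F: "finite F"
  shows "(\<And>x. lo \<le> Re (symbol R a x)) \<Longrightarrow> lo * (\<Sum>k\<in>F. (cmod (c k))\<^sup>2) \<le> Re (gram_form F c a)"
    and "(\<And>x. Re (symbol R a x) \<le> hi) \<Longrightarrow> Re (gram_form F c a) \<le> hi * (\<Sum>k\<in>F. (cmod (c k))\<^sup>2)"
proof -
  obtain N where N: "F \<subseteq> cube N" using finite_subset_cube[OF F] by blast
  define L where "L = 2*N + R + 1"
  let ?P = "real L ^ CARD('n)"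
  let ?w = "\<lambda>t. (cmod (fourier F c (grid_point L t)))\<^sup>2"
  have L: "2*N + R < L" by (simp add: L_def)
  have P: "?P > 0" by (simp add: L_def)
  have parseval: "(\<Sum>t\<in>grid L. ?w t) = ?P * (\<Sum>k\<in>F. (cmod (c k))\<^sup>2)"
    by (rule sum_grid_norm_fourier[OF N]) (use L in simp)
  have weighted: "(\<Sum>t\<in>grid L. Re (symbol R a (grid_point L t)) * ?w t) = ?P * Re (gram_form F c a)"
    by (rule sum_grid_symbol_norm_fourier[where a=a, OF N supp herm L])
  show "lo * (\<Sum>k\<in>F. (cmod (c k))\<^sup>2) \<le> Re (gram_form F c a)"
    if lo: "\<And>x. lo \<le> Re (symbol R a x)"
  proof -
    have "?P * (lo * (\<Sum>k\<in>F. (cmod (c k))\<^sup>2)) = (\<Sum>t\<in>grid L. lo * ?w t)"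
      by (simp add: parseval sum_distrib_left[symmetric] mult_ac)
    also have "\<dots> \<le> ?P * Re (gram_form F c a)"
      unfolding weighted[symmetric] by (intro sum_mono mult_right_mono lo) simp
    finally show ?thesis using P by simp
  qed
  show "Re (gram_form F c a) \<le> hi * (\<Sum>k\<in>F. (cmod (c k))\<^sup>2)"
    if hi: "\<And>x. Re (symbol R a x) \<le> hi"
  proof -
    have "?P * Re (gram_form F c a) \<le> (\<Sum>t\<in>grid L. hi * ?w t)"
      unfolding weighted[symmetric] by (intro sum_mono mult_right_mono hi) simp
    also have "\<dots> = ?P * (hi * (\<Sum>k\<in>F. (cmod (c k))\<^sup>2))"
      by (simp add: parseval sum_distrib_left[symmetric] mult_ac)
    finally show ?thesis using P by simp
  qed
qed

lemma norm_gram_apply_le: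
  assumes F: "finite F" and supp: "\<And>m. m \<notin> cube R \<Longrightarrow> a m = 0" and c: "\<And>j. cmod (c j) \<le> 1"
  shows "cmod (gram_apply F c a k) \<le> (\<Sum>m\<in>cube R. cmod (a m))"
proof -
  have inj: "inj_on (\<lambda>j. j - k) F" by (rule inj_onI) simp
  have "cmod (gram_apply F c a k) \<le> (\<Sum>j\<in>F. cmod (c j * a (j - k)))"
    unfolding gram_apply_def by (rule norm_sum)
  also have "\<dots> \<le> (\<Sum>j\<in>F. cmod (a (j - k)))"
    by (rule sum_mono) (simp add: norm_mult mult_left_le_one_le c)
  also have "\<dots> = (\<Sum>m\<in>(\<lambda>j. j - k) ` F. cmod (a m))"
    by (simp add: sum.reindex[OF inj])
  also have "\<dots> \<le> (\<Sum>m\<in>(\<lambda>j. j - k) ` F \<union> cube R. cmod (a m))"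
    by (rule sum_mono2) (use F in auto)
  also have "\<dots> = (\<Sum>m\<in>cube R. cmod (a m))"
    by (rule sum.mono_neutral_right) (use F supp in auto)
  finally show ?thesis .
qed


section \<open>A frame inequality forces a gap in the range of the symbol\<close>

text \<open>The test sequences below are plane waves \<open>c\<^sub>j = e(j\<cdot>x)\<close> on a cube: the Gram
  matrix acts on them as multiplication by the symbol at \<open>x\<close>, up to boundary terms
  whose number is of lower order than the volume of the cube.\<close>

lemma gram_apply_plane_wave:
  assumes supp: "\<And>m. m \<notin> cube R \<Longrightarrow> a m = 0" and k: "k \<in> cube N"
  shows "gram_apply (cube (N + R)) (\<lambda>j. e2pi (of_int_vec j \<bullet> x)) a k = e2pi (of_int_vec k \<bullet> x) * symbol R a x"
proof -
  have "gram_apply (cube (N + R)) (\<lambda>j. e2pi (of_int_vec j \<bullet> x)) a k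
      = (\<Sum>m\<in>cube R. e2pi (of_int_vec (k + m) \<bullet> x) * a (k + m - k))"
    unfolding gram_apply_def by (rule sum_cube_reindex_add[OF k]) (simp add: supp)
  also have "\<dots> = e2pi (of_int_vec k \<bullet> x) * symbol R a x"
    unfolding symbol_def sum_distrib_left
    by (intro sum.cong refl) (simp add: of_int_vec_add inner_add_left e2pi_add mult_ac)
  finally show ?thesis .
qed

lemma re_gram_form_plane_wave_ge:
  fixes x :: "real^'n"
  assumes supp: "\<And>m. m \<notin> cube R \<Longrightarrow> a m = 0" and herm: "\<And>m. a (-m) = cnj (a m)"
  defines "c \<equiv> \<lambda>j::int^'n. e2pi (of_int_vec j \<bullet> x)"
  shows "real (card (cube n :: (int^'n) set)) * Re (symbol R a x)
           - real (card (cube (n + R) - cube n :: (int^'n) set)) * (\<Sum>m\<in>cube R. cmod (a m))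
         \<le> Re (gram_form (cube (n + R)) c a)"
proof -
  let ?G = "gram_apply (cube (n + R)) c a"
  define E where "E = (\<Sum>k\<in>cube (n + R) - cube n. cnj (c k) * ?G k)"
  have sub: "cube n \<subseteq> cube (n + R)" by (rule cube_mono) simp
  have bulk: "cnj (c k) * ?G k = symbol R a x" if "k \<in> cube n" for k
    using gram_apply_plane_wave[OF supp that, where x=x] e2pi_mult_cnj
    by (simp add: c_def mult_ac)
  have "gram_form (cube (n + R)) c a = E + (\<Sum>k\<in>cube n. cnj (c k) * ?G k)"
    unfolding gram_form_eq_sum_gram_apply E_def by (rule sum.subset_diff[OF sub finite_cube])
  also have "\<dots> = E + of_nat (card (cube n :: (int^'n) set)) * symbol R a x"
    by (simp add: bulk)
  finally have split: "gram_form (cube (n + R)) c a = \<dots>" .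
  have "cmod E \<le> (\<Sum>k\<in>cube (n + R) - cube n. cmod (cnj (c k) * ?G k))"
    unfolding E_def by (rule norm_sum)
  also have "\<dots> \<le> (\<Sum>k\<in>(cube (n + R) - cube n :: (int^'n) set). \<Sum>m\<in>cube R. cmod (a m))"
    by (intro sum_mono) (simp add: norm_mult c_def norm_gram_apply_le[OF finite_cube supp])
  finally have "- Re E \<le> real (card (cube (n + R) - cube n :: (int^'n) set)) * (\<Sum>m\<in>cube R. cmod (a m))"
    using abs_Re_le_cmod[of E] by simp
  then show ?thesis
    by (subst split, subst symbol_real[where a=a, OF herm]) simp
qed

lemma sum_norm_gram_apply_plane_wave_le:
  fixes x :: "real^'n"
  assumes supp: "\<And>m. m \<notin> cube R \<Longrightarrow> a m = 0" and herm: "\<And>m. a (-m) = cnj (a m)"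
  defines "c \<equiv> \<lambda>j::int^'n. e2pi (of_int_vec j \<bullet> x)"
  shows "(\<Sum>k\<in>cube (n + R + R). (cmod (gram_apply (cube (n + R)) c a k))\<^sup>2)
       \<le> real (card (cube (n + R + R) - cube n :: (int^'n) set)) * (\<Sum>m\<in>cube R. cmod (a m))\<^sup>2
         + real (card (cube n :: (int^'n) set)) * (Re (symbol R a x))\<^sup>2"
proof -
  let ?G = "gram_apply (cube (n + R)) c a"
  have sub: "cube n \<subseteq> cube (n + R + R)" by (rule cube_mono) simp
  have "(\<Sum>k\<in>cube (n + R + R). (cmod (?G k))\<^sup>2)
      = (\<Sum>k\<in>cube (n + R + R) - cube n. (cmod (?G k))\<^sup>2) + (\<Sum>k\<in>cube n. (cmod (?G k))\<^sup>2)"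
    by (rule sum.subset_diff[OF sub finite_cube])
  also have "(\<Sum>k\<in>cube n. (cmod (?G k))\<^sup>2) = (\<Sum>k\<in>(cube n :: (int^'n) set). (Re (symbol R a x))\<^sup>2)"
    by (intro sum.cong refl)
      (simp add: c_def gram_apply_plane_wave[OF supp] norm_mult norm_symbol[where a=a, OF herm])
  also have "(\<Sum>k\<in>cube (n + R + R) - cube n. (cmod (?G k))\<^sup>2)
      \<le> (\<Sum>k\<in>(cube (n + R + R) - cube n :: (int^'n) set). (\<Sum>m\<in>cube R. cmod (a m))\<^sup>2)"
    by (intro sum_mono power_mono) (simp_all add: c_def norm_gram_apply_le[OF finite_cube supp])
  finally show ?thesis by simp
qed

lemma frame_ineq_plane_wave:
  fixes a :: "int^'n \<Rightarrow> complex"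
  assumes supp: "\<And>m. m \<notin> cube R \<Longrightarrow> a m = 0" and herm: "\<And>m. a (-m) = cnj (a m)"
    and frame: "\<And>N c. b * Re (gram_form (cube N) c a) \<le> (\<Sum>k\<in>cube (N + R). (cmod (gram_apply (cube N) c a k))\<^sup>2)"
    and b: "b \<ge> 0"
  shows "real (card (cube n :: (int^'n) set)) * (b * Re (symbol R a x) - (Re (symbol R a x))\<^sup>2)
     \<le> ((\<Sum>m\<in>cube R. cmod (a m))\<^sup>2 + b * (\<Sum>m\<in>cube R. cmod (a m))) *
        (real (card (cube (n + R + R) :: (int^'n) set)) - real (card (cube n :: (int^'n) set)))"
proof -
  define c where "c = (\<lambda>j::int^'n. e2pi (of_int_vec j \<bullet> x))"
  define p where "p = Re (symbol R a x)"
  define s where "s = (\<Sum>m\<in>cube R. cmod (a m))"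
  define vol where "vol = real (card (cube n :: (int^'n) set))"
  define rim where "rim = real (card (cube (n + R) - cube n :: (int^'n) set))"
  define rim' where "rim' = real (card (cube (n + R + R) - cube n :: (int^'n) set))"
  have s: "s \<ge> 0" by (simp add: s_def sum_nonneg)
  have "b * (vol * p - rim * s) \<le> b * Re (gram_form (cube (n + R)) c a)"
    using re_gram_form_plane_wave_ge[where a=a and R=R and n=n and x=x, OF supp herm] b
    by (intro mult_left_mono) (simp_all add: c_def p_def s_def vol_def rim_def)
  also have "\<dots> \<le> rim' * s\<^sup>2 + vol * p\<^sup>2"
    using frame[of "n + R" c] sum_norm_gram_apply_plane_wave_le[where a=a and R=R and n=n and x=x, OF supp herm]
    by (simp add: c_def p_def s_def vol_def rim'_def)
  finally have main: "b * (vol * p - rim * s) \<le> rim' * s\<^sup>2 + vol * p\<^sup>2" .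
  have "rim \<le> rim'"
    unfolding rim_def rim'_def
    by (intro of_nat_mono card_mono) (use cube_mono[of "n + R" "n + R + R"] in auto)
  then have "b * rim * s \<le> b * rim' * s"
    using b s by (intro mult_right_mono mult_left_mono) auto
  with main have "vol * (b * p - p\<^sup>2) \<le> rim' * (s\<^sup>2 + b * s)"
    by (simp add: algebra_simps)
  moreover have "rim' = real (card (cube (n + R + R) :: (int^'n) set)) - vol"
    unfolding rim'_def vol_def
    by (subst card_Diff_subset) (auto simp: of_nat_diff card_mono cube_mono)
  ultimately show ?thesis by (simp add: p_def s_def vol_def mult.commute)
qed

lemma frame_ineq_imp_symbol_gap:
  fixes a :: "int^'n \<Rightarrow> complex"
  assumes supp: "\<And>m. m \<notin> cube R \<Longrightarrow> a m = 0" and herm: "\<And>m. a (-m) = cnj (a m)"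
    and frame: "\<And>N c. b * Re (gram_form (cube N) c a) \<le> (\<Sum>k\<in>cube (N + R). (cmod (gram_apply (cube N) c a k))\<^sup>2)"
    and b: "b \<ge> 0"
  shows "b * Re (symbol R a x) \<le> (Re (symbol R a x))\<^sup>2"
proof (rule ccontr)
  define p where "p = Re (symbol R a x)"
  define s where "s = (\<Sum>m\<in>cube R. cmod (a m))"
  define C where "C = s\<^sup>2 + b * s"
  define d where "d = CARD('n)"
  define r where "r = b * p - p\<^sup>2"
  define growth where "growth n = C * ((1 + 4 * real R / real n) ^ d - 1)" for n
  assume "\<not> b * Re (symbol R a x) \<le> (Re (symbol R a x))\<^sup>2"
  then have r: "0 < r" by (simp add: r_def p_def)
  have C: "C \<ge> 0" using b by (simp add: C_def s_def sum_nonneg)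
  have "growth \<longlonglongrightarrow> C * ((1 + 0) ^ d - 1)"
    unfolding growth_def by (intro tendsto_intros lim_const_over_n)
  then have "growth \<longlonglongrightarrow> 0" by simp
  from order_tendstoD(2)[OF this r] obtain n0 where n0: "\<And>n. n \<ge> n0 \<Longrightarrow> growth n < r"
    by (auto simp: eventually_sequentially)
  define n where "n = Suc n0"
  define u where "u = real (2*n+1)"
  define v where "v = real (2*(n + R + R)+1)"
  have u: "u > 0" by (simp add: u_def)
  have "u ^ d * r \<le> C * (v ^ d - u ^ d)"
    using frame_ineq_plane_wave[where a=a and R=R and n=n and x=x, OF supp herm frame b] unfolding card_cube
    by (simp add: u_def v_def d_def r_def p_def C_def s_def mult.commute)
  also have "v ^ d = u ^ d * (v / u) ^ d" using u by (simp add: power_divide)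
  finally have "u ^ d * r \<le> u ^ d * (C * ((v / u) ^ d - 1))" by (simp add: algebra_simps)
  also have "\<dots> \<le> u ^ d * growth n"
  proof -
    have "v / u = 1 + 4 * real R / u" using u by (simp add: u_def v_def field_simps)
    also have "\<dots> \<le> 1 + 4 * real R / real n"
      by (simp add: divide_left_mono u_def n_def)
    finally have "(v / u) ^ d \<le> (1 + 4 * real R / real n) ^ d"
      using u by (intro power_mono) (auto simp: v_def)
    then show ?thesis unfolding growth_def using C u by (intro mult_left_mono) auto
  qed
  finally have "r \<le> growth n" using u by simp
  with n0[of n] show False by (simp add: n_def)
qed

lemma continuous_gap_imp_lower_bound:
  fixes p :: "'a::real_normed_vector \<Rightarrow> real"
  assumes cont: "continuous_on UNIV p" and gap: "\<And>x. b * p x \<le> (p x)\<^sup>2" and b: "b > 0"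
    and pos: "\<exists>x. p x > 0"
  shows "b \<le> p x"
proof (rule ccontr)
  assume x: "\<not> b \<le> p x"
  have above: "b \<le> p y" if "p y > 0" for y
    using gap[of y] that by (simp add: power2_eq_square)
  have "closed {x. p x \<le> 0}" "closed {x. b \<le> p x}"
    by (intro closed_Collect_le cont continuous_on_const)+
  moreover have "UNIV \<subseteq> {x. p x \<le> 0} \<union> {x. b \<le> p x}"
    using above by force
  moreover have "{x. p x \<le> 0} \<inter> {x. b \<le> p x} \<inter> UNIV = {}" using b by auto
  moreover have "{x. p x \<le> 0} \<inter> UNIV \<noteq> {}"
    using x above by (metis (mono_tags) Int_UNIV_right empty_iff mem_Collect_eq not_le)
  moreover have "{x. b \<le> p x} \<inter> UNIV \<noteq> {}" using pos above by blast
  ultimately show False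
    using connected_UNIV[where 'a='a] unfolding connected_closed by blast
qed


section \<open>A Neumann series for the Gram matrix\<close>

text \<open>\<open>neumann a R S N0 j0 n\<close> is \<open>(I - G/S)\<^sup>n \<delta>\<^sub>j\<^sub>0\<close> for the Gram matrix \<open>G c = gram_apply _ c a\<close>.
  The recursion sums over \<open>cube (N0 + n * R)\<close>, which contains the support of the \<open>n\<close>-th
  iterate when \<open>a\<close> vanishes outside \<open>cube R\<close> and \<open>j0 \<in> cube N0\<close>.\<close>

primrec neumann :: "(int^'n \<Rightarrow> complex) \<Rightarrow> nat \<Rightarrow> real \<Rightarrow> nat \<Rightarrow> int^'n \<Rightarrow> nat \<Rightarrow> int^'n \<Rightarrow> complex" where
  "neumann a R S N0 j0 0 = (\<lambda>k. if k = j0 then 1 else 0)"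
| "neumann a R S N0 j0 (Suc n) = (\<lambda>k. neumann a R S N0 j0 n k
      - gram_apply (cube (N0 + n*R)) (neumann a R S N0 j0 n) a k / complex_of_real S)"

lemma neumann_outside_cube:
  fixes a :: "int^'n \<Rightarrow> complex"
  assumes supp: "\<And>m. m \<notin> cube R \<Longrightarrow> a m = 0" and j0: "j0 \<in> cube N0"
  shows "k \<notin> cube (N0 + n*R) \<Longrightarrow> neumann a R S N0 j0 n k = 0"
proof (induction n arbitrary: k)
  case (Suc n)
  have "cube (N0 + n*R) \<subseteq> cube (N0 + Suc n * R)" by (rule cube_mono) simp
  then have "neumann a R S N0 j0 n k = 0" using Suc by blast
  moreover have "gram_apply (cube (N0 + n*R)) (neumann a R S N0 j0 n) a k = 0"
  proof (rule gram_apply_outside_cube[OF order_refl supp])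
    have "N0 + n*R + R = N0 + Suc n * R" by simp
    with Suc.prems show "k \<notin> cube (N0 + n*R + R)" by metis
  qed
  ultimately show ?case by simp
qed (use j0 in auto)

lemma fourier_neumann:
  fixes a :: "int^'n \<Rightarrow> complex"
  assumes supp: "\<And>m. m \<notin> cube R \<Longrightarrow> a m = 0" and j0: "j0 \<in> cube N0"
  shows "fourier (cube (N0 + n*R)) (neumann a R S N0 j0 n) x
       = (1 - symbol R a x / complex_of_real S) ^ n * e2pi (- (of_int_vec j0 \<bullet> x))"
proof (induction n)
  case 0
  have "fourier (cube N0) (neumann a R S N0 j0 0) x = (\<Sum>j\<in>cube N0. if j = j0 then e2pi (- (of_int_vec j \<bullet> x)) else 0)"
    unfolding fourier_def by (intro sum.cong) auto
  then show ?case using j0 by simp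
next
  case (Suc n)
  define B :: "(int^'n) set" where "B = cube (N0 + n*R)"
  have B': "cube (N0 + Suc n * R) = cube (N0 + n*R + R)" by (simp add: algebra_simps)
  have extend: "fourier (cube (N0 + n*R + R)) (neumann a R S N0 j0 n) x = fourier B (neumann a R S N0 j0 n) x"
    unfolding B_def
    by (rule fourier_extend) (use cube_mono[of "N0 + n*R" "N0 + n*R + R"] neumann_outside_cube[where a=a and R=R, OF supp j0] in auto)
  have apply_gram: "fourier (cube (N0 + n*R + R)) (gram_apply B (neumann a R S N0 j0 n) a) x
      = fourier B (neumann a R S N0 j0 n) x * symbol R a x"
    unfolding B_def by (rule fourier_gram_apply[OF order_refl supp])
  show ?case
    unfolding B' neumann.simps fourier_diff_divide B_def[symmetric] extend apply_gram Suc[folded B_def]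
    by (simp add: algebra_simps)
qed

lemma gram_apply_neumann_sum:
  fixes a :: "int^'n \<Rightarrow> complex"
  assumes supp: "\<And>m. m \<notin> cube R \<Longrightarrow> a m = 0" and j0: "j0 \<in> cube N0"
  shows "gram_apply (cube (N0 + M*R)) (\<lambda>k. (\<Sum>n<M. neumann a R S N0 j0 n k) / complex_of_real S) a k
       = (if k = j0 then 1 else 0) - neumann a R S N0 j0 M k"
proof -
  define F :: "(int^'n) set" where "F = cube (N0 + M*R)"
  have "gram_apply F (\<lambda>k. (\<Sum>n<M. neumann a R S N0 j0 n k) / complex_of_real S) a k
      = (\<Sum>n<M. gram_apply F (neumann a R S N0 j0 n) a k / complex_of_real S)"
    unfolding gram_apply_def sum_divide_distrib sum_distrib_right
    by (subst sum.swap) (simp add: algebra_simps)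
  also have "\<dots> = (\<Sum>n<M. neumann a R S N0 j0 n k - neumann a R S N0 j0 (Suc n) k)"
  proof (rule sum.cong[OF refl])
    fix n assume "n \<in> {..<M}"
    then have "cube (N0 + n*R) \<subseteq> F" unfolding F_def by (intro cube_mono) simp
    then have "gram_apply F (neumann a R S N0 j0 n) a k = gram_apply (cube (N0 + n*R)) (neumann a R S N0 j0 n) a k"
      by (rule gram_apply_extend) (auto simp: F_def intro: neumann_outside_cube[where a=a and R=R, OF supp j0])
    then show "gram_apply F (neumann a R S N0 j0 n) a k / complex_of_real S
        = neumann a R S N0 j0 n k - neumann a R S N0 j0 (Suc n) k"
      by simp
  qed
  also have "\<dots> = neumann a R S N0 j0 0 k - neumann a R S N0 j0 M k" by (rule sum_lessThan_telescope')
  finally show ?thesis by (simp add: F_def)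
qed

lemma sum_norm_neumann_le:
  fixes a :: "int^'n \<Rightarrow> complex"
  assumes supp: "\<And>m. m \<notin> cube R \<Longrightarrow> a m = 0" and herm: "\<And>m. a (-m) = cnj (a m)"
    and j0: "j0 \<in> cube N0"
    and lo: "\<And>x. b \<le> Re (symbol R a x)" and hi: "\<And>x. Re (symbol R a x) \<le> S" and b: "0 < b"
  shows "(\<Sum>k\<in>cube (N0 + M*R). (cmod (neumann a R S N0 j0 M k))\<^sup>2) \<le> (1 - b / S) ^ (2*M)"
proof -
  define N where "N = N0 + M*R"
  define L where "L = 2*N + 1"
  let ?P = "real L ^ CARD('n)"
  have S: "S > 0" using lo[of 0] hi[of 0] b by linarith
  have pointwise: "(cmod (fourier (cube N) (neumann a R S N0 j0 M) x))\<^sup>2 \<le> (1 - b / S) ^ (2*M)" for x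
  proof -
    define p where "p = Re (symbol R a x)"
    have real: "1 - symbol R a x / complex_of_real S = complex_of_real (1 - p / S)"
      by (subst symbol_real[where a=a, OF herm]) (simp add: p_def)
    have "cmod (fourier (cube N) (neumann a R S N0 j0 M) x)
        = cmod ((1 - symbol R a x / complex_of_real S) ^ M * e2pi (- (of_int_vec j0 \<bullet> x)))"
      using fourier_neumann[where a=a and R=R and n=M and S=S and x=x, OF supp j0] by (simp add: N_def)
    also have "\<dots> = \<bar>1 - p / S\<bar> ^ M"
      by (simp only: real norm_mult norm_power norm_of_real norm_e2pi mult_1_right)
    finally have "cmod (fourier (cube N) (neumann a R S N0 j0 M) x) = \<bar>1 - p / S\<bar> ^ M" .
    moreover have "\<bar>1 - p / S\<bar> \<le> 1 - b / S"
      using lo[of x] hi[of x] S b by (auto simp: p_def field_simps)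
    ultimately have "(cmod (fourier (cube N) (neumann a R S N0 j0 M) x))\<^sup>2 \<le> ((1 - b / S) ^ M)\<^sup>2"
      by (simp add: power_mono)
    then show ?thesis by (simp add: power_mult[symmetric] mult.commute)
  qed
  have "?P * (\<Sum>k\<in>cube N. (cmod (neumann a R S N0 j0 M k))\<^sup>2)
      = (\<Sum>t\<in>grid L. (cmod (fourier (cube N) (neumann a R S N0 j0 M) (grid_point L t)))\<^sup>2)"
    by (rule sum_grid_norm_fourier[OF order_refl, symmetric]) (simp add: L_def)
  also have "\<dots> \<le> (\<Sum>t\<in>(grid L :: (nat^'n) set). (1 - b / S) ^ (2*M))"
    by (intro sum_mono pointwise)
  also have "\<dots> = ?P * (1 - b / S) ^ (2*M)" by (simp add: card_grid)
  finally show ?thesis unfolding N_def by (rule mult_left_le_imp_le) (simp add: L_def)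
qed

lemma borel_measurable_cnj [measurable]:
  assumes "g \<in> borel_measurable M" shows "(\<lambda>x. cnj (g x)) \<in> borel_measurable M"
proof -
  have "cnj \<in> borel_measurable borel"
    by (intro borel_measurable_continuous_onI linear_continuous_on bounded_linear_cnj)
  from measurable_compose[OF assms this] show ?thesis by (simp add: comp_def)
qed

lemma lborel_integrable_translate:
  fixes g :: "'a::euclidean_space \<Rightarrow> 'b::{banach, second_countable_topology}"
  assumes [measurable]: "g \<in> borel_measurable borel"
  shows "integrable lborel (\<lambda>x. g (c + x)) \<longleftrightarrow> integrable lborel g"
proof -
  have "integrable (distr lborel borel ((+) c)) g \<longleftrightarrow> integrable lborel (\<lambda>x. g (c + x))"
    by (rule integrable_distr_eq) auto
  then show ?thesis by (simp add: lborel_distr_plus)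
qed

lemma lborel_integral_translate:
  fixes g :: "'a::euclidean_space \<Rightarrow> 'b::{banach, second_countable_topology}"
  assumes [measurable]: "g \<in> borel_measurable borel"
  shows "(LINT x|lborel. g (c + x)) = (LINT x|lborel. g x)"
proof -
  have "integral\<^sup>L (distr lborel borel ((+) c)) g = (LINT x|lborel. g (c + x))"
    by (rule integral_distr) auto
  then show ?thesis by (simp add: lborel_distr_plus)
qed

lemma AE_lborel_translate:
  fixes P :: "'a::euclidean_space \<Rightarrow> bool"
  assumes [measurable]: "Measurable.pred borel P" and ae: "AE x in lborel. P x"
  shows "AE x in lborel. P (c + x)"
proof -
  have "(AE x in distr lborel borel ((+) c). P x) \<longleftrightarrow> (AE x in lborel. P (c + x))"
    by (rule AE_distr_iff) auto
  then show ?thesis using ae by (simp only: lborel_distr_plus)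
qed

lemma L2_measurable: "h \<in> L2 \<Longrightarrow> h \<in> borel_measurable borel"
  by (simp add: L2_def)

lemma L2_integrable: "h \<in> L2 \<Longrightarrow> integrable lborel (\<lambda>x. (cmod (h x))\<^sup>2)"
  by (simp add: L2_def)

lemma L2_transl:
  assumes f: "f \<in> L2" shows "transl y f \<in> L2"
proof -
  have [measurable]: "f \<in> borel_measurable borel" using L2_measurable[OF f] .
  have "integrable lborel (\<lambda>x. (cmod (f ((- y) + x)))\<^sup>2)"
    by (subst lborel_integrable_translate) (use L2_integrable[OF f] in auto)
  moreover have "transl y f \<in> borel_measurable borel" unfolding transl_def by measurable
  ultimately show ?thesis by (simp add: L2_def transl_def)
qed

lemma L2_add:
  assumes "h1 \<in> L2" "h2 \<in> L2" shows "(\<lambda>x. h1 x + h2 x) \<in> L2"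
proof -
  have [measurable]: "h1 \<in> borel_measurable borel" "h2 \<in> borel_measurable borel"
    using assms L2_measurable by auto
  have bound: "(cmod (h1 x + h2 x))\<^sup>2 \<le> 2 * (cmod (h1 x))\<^sup>2 + 2 * (cmod (h2 x))\<^sup>2" for x
  proof -
    have "(cmod (h1 x + h2 x))\<^sup>2 \<le> (cmod (h1 x) + cmod (h2 x))\<^sup>2"
      by (intro power_mono norm_triangle_ineq) simp
    also have "\<dots> \<le> 2 * (cmod (h1 x))\<^sup>2 + 2 * (cmod (h2 x))\<^sup>2"
      using zero_le_power2[of "cmod (h1 x) - cmod (h2 x)"] by (simp add: power2_sum power2_diff)
    finally show ?thesis .
  qed
  have "integrable lborel (\<lambda>x. (cmod (h1 x + h2 x))\<^sup>2)"
  proof (rule Bochner_Integration.integrable_bound)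
    show "integrable lborel (\<lambda>x. 2 * (cmod (h1 x))\<^sup>2 + 2 * (cmod (h2 x))\<^sup>2)"
      by (intro Bochner_Integration.integrable_add integrable_mult_right L2_integrable assms)
  qed (use bound in \<open>simp_all add: AE_I2\<close>)
  then show ?thesis by (simp add: L2_def)
qed

lemma L2_cmult:
  assumes "h \<in> L2" shows "(\<lambda>x. c * h x) \<in> L2"
proof -
  have [measurable]: "h \<in> borel_measurable borel" using assms L2_measurable by auto
  have "integrable lborel (\<lambda>x. (cmod c)\<^sup>2 * (cmod (h x))\<^sup>2)" using L2_integrable[OF assms] by auto
  then show ?thesis by (simp add: L2_def norm_mult power_mult_distrib)
qed

lemma L2_sum:
  assumes "finite F" "\<And>k. k \<in> F \<Longrightarrow> g k \<in> L2"
  shows "(\<lambda>x. \<Sum>k\<in>F. c k * g k x) \<in> L2"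
  using assms
proof (induction F rule: finite_induct)
  case empty then show ?case by (simp add: L2_def)
next
  case (insert k F) then show ?case by (simp add: L2_add L2_cmult)
qed

lemma mult_le_sum_squares:
  fixes u v :: real
  assumes "0 \<le> u" "0 \<le> v"
  shows "u * v \<le> u\<^sup>2 + v\<^sup>2"
  using power2_diff[of u v] zero_le_power2[of "u - v"] mult_nonneg_nonneg[OF assms]
  by (simp only: mult.assoc)

lemma L2_integrable_norm_mult:
  assumes "h \<in> L2" "g \<in> L2"
  shows "integrable lborel (\<lambda>x. cmod (h x) * cmod (g x))"
proof -
  have [measurable]: "h \<in> borel_measurable borel" "g \<in> borel_measurable borel"
    using assms L2_measurable by auto
  show ?thesis
  proof (rule Bochner_Integration.integrable_bound)
    show "integrable lborel (\<lambda>x. (cmod (h x))\<^sup>2 + (cmod (g x))\<^sup>2)"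
      by (intro Bochner_Integration.integrable_add L2_integrable assms)
    show "AE x in lborel. norm (cmod (h x) * cmod (g x)) \<le> norm ((cmod (h x))\<^sup>2 + (cmod (g x))\<^sup>2)"
      by (rule AE_I2) (simp add: mult_le_sum_squares)
  qed measurable
qed

lemma L2_integrable_mult_cnj:
  assumes "h \<in> L2" "g \<in> L2"
  shows "integrable lborel (\<lambda>x. h x * cnj (g x))"
proof -
  have [measurable]: "h \<in> borel_measurable borel" "g \<in> borel_measurable borel"
    using assms L2_measurable by auto
  show ?thesis
  proof (rule Bochner_Integration.integrable_bound[OF L2_integrable_norm_mult[OF assms]])
    show "AE x in lborel. norm (h x * cnj (g x)) \<le> norm (cmod (h x) * cmod (g x))"
      by (rule AE_I2) (simp add: norm_mult)
  qed measurable
qed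

lemma l2norm_squared: "h \<in> L2 \<Longrightarrow> (l2norm h)\<^sup>2 = (LINT x|lborel. (cmod (h x))\<^sup>2)"
  unfolding l2norm_def by (simp add: integral_nonneg_AE)

lemma l2ip_self: "h \<in> L2 \<Longrightarrow> l2ip h h = complex_of_real ((l2norm h)\<^sup>2)"
  unfolding l2ip_def by (simp add: l2norm_squared complex_norm_square[symmetric] del: of_real_power)

lemma cnj_l2ip: "cnj (l2ip g h) = l2ip h g"
  unfolding l2ip_def by (subst Bochner_Integration.integral_cnj[symmetric]) (simp add: mult.commute)

lemma l2ip_sum_left:
  assumes "finite F" and "\<And>j. j \<in> F \<Longrightarrow> g j \<in> L2" and "g' \<in> L2"
  shows "l2ip (\<lambda>x. \<Sum>j\<in>F. c j * g j x) g' = (\<Sum>j\<in>F. c j * l2ip (g j) g')"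
proof -
  have "l2ip (\<lambda>x. \<Sum>j\<in>F. c j * g j x) g' = (LINT x|lborel. (\<Sum>j\<in>F. c j * (g j x * cnj (g' x))))"
    unfolding l2ip_def by (simp add: sum_distrib_right mult.assoc)
  also have "\<dots> = (\<Sum>j\<in>F. LINT x|lborel. c j * (g j x * cnj (g' x)))"
    by (rule Bochner_Integration.integral_sum) (auto intro!: integrable_mult_right L2_integrable_mult_cnj assms)
  finally show ?thesis by (simp add: l2ip_def)
qed

lemma l2ip_sum_right:
  assumes "finite F" and "\<And>j. j \<in> F \<Longrightarrow> g j \<in> L2" and "g' \<in> L2"
  shows "l2ip g' (\<lambda>x. \<Sum>j\<in>F. c j * g j x) = (\<Sum>j\<in>F. cnj (c j) * l2ip g' (g j))"
proof -
  have "l2ip g' (\<lambda>x. \<Sum>j\<in>F. c j * g j x) = cnj (\<Sum>j\<in>F. c j * l2ip (g j) g')"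
    by (simp only: l2ip_sum_left[OF assms, symmetric] cnj_l2ip)
  then show ?thesis by (simp add: cnj_l2ip)
qed

lemma discriminant_nonpos_if_nonneg:
  fixes U V W :: real
  assumes q: "\<And>t. 0 \<le> t\<^sup>2 * U - 2 * t * W + V" and U: "0 \<le> U"
  shows "W\<^sup>2 \<le> U * V"
proof (cases "U = 0")
  case True
  have "W = 0"
  proof (rule ccontr)
    assume W: "W \<noteq> 0"
    have "0 \<le> ((V + 1) / (2 * W))\<^sup>2 * U - 2 * ((V + 1) / (2 * W)) * W + V" by (rule q)
    moreover have "2 * ((V + 1) / (2 * W)) * W = V + 1" using W by (simp add: field_simps)
    ultimately show False using True by simp
  qed
  then show ?thesis using True by simp
next
  case False
  then have U: "U > 0" using U by simp
  have "0 \<le> (W / U)\<^sup>2 * U - 2 * (W / U) * W + V" by (rule q)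
  also have "\<dots> = V - W\<^sup>2 / U" using U by (simp add: field_simps power2_eq_square)
  finally show ?thesis using U by (simp add: field_simps mult.commute)
qed

lemma l2ip_Cauchy_Schwarz:
  assumes h: "h \<in> L2" and g: "g \<in> L2"
  shows "(cmod (l2ip h g))\<^sup>2 \<le> (l2norm h)\<^sup>2 * (l2norm g)\<^sup>2"
proof -
  define U where "U = (LINT x|lborel. (cmod (h x))\<^sup>2)"
  define V where "V = (LINT x|lborel. (cmod (g x))\<^sup>2)"
  define W where "W = (LINT x|lborel. cmod (h x) * cmod (g x))"
  have "cmod (l2ip h g) \<le> (LINT x|lborel. cmod (h x * cnj (g x)))"
    unfolding l2ip_def by (rule integral_norm_bound)
  then have "cmod (l2ip h g) \<le> W" by (simp add: W_def norm_mult)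
  then have "(cmod (l2ip h g))\<^sup>2 \<le> W\<^sup>2" by (simp add: power_mono)
  also have "W\<^sup>2 \<le> U * V"
  proof (rule discriminant_nonpos_if_nonneg)
    fix t :: real
    have "0 \<le> (LINT x|lborel. (t * cmod (h x) - cmod (g x))\<^sup>2)"
      by (rule integral_nonneg_AE) auto
    also have "\<dots> = (LINT x|lborel. t\<^sup>2 * (cmod (h x))\<^sup>2 - 2 * t * (cmod (h x) * cmod (g x)) + (cmod (g x))\<^sup>2)"
      by (rule Bochner_Integration.integral_cong) (auto simp: power2_eq_square algebra_simps)
    also have "\<dots> = t\<^sup>2 * U - 2 * t * W + V"
      using L2_integrable[OF h] L2_integrable[OF g] L2_integrable_norm_mult[OF h g]
      by (simp add: U_def V_def W_def)
    finally show "0 \<le> t\<^sup>2 * U - 2 * t * W + V" .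
    show "0 \<le> U" unfolding U_def by (rule integral_nonneg_AE) auto
  qed
  finally show ?thesis by (simp add: l2norm_squared h g U_def V_def)
qed

lemma l2ip_transl_transl:
  assumes f: "f \<in> L2"
  shows "l2ip (transl u f) (transl v f) = l2ip (transl (u - v) f) f"
proof -
  have [measurable]: "f \<in> borel_measurable borel" using L2_measurable[OF f] .
  define G where "G x = f (x - u) * cnj (f (x - v))" for x
  have [measurable]: "G \<in> borel_measurable borel" unfolding G_def by measurable
  have "l2ip (transl u f) (transl v f) = (LINT x|lborel. G x)" by (simp add: l2ip_def transl_def G_def)
  also have "\<dots> = (LINT x|lborel. G (v + x))" by (rule lborel_integral_translate[symmetric]) measurable
  also have "\<dots> = l2ip (transl (u - v) f) f"
    unfolding l2ip_def transl_def G_def by (simp add: algebra_simps)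
  finally show ?thesis .
qed

section \<open>Integer translates of a compactly supported function\<close>

lemma invertible_imp_lattice_ball_in_cube:
  fixes A :: "real^'n^'n"
  assumes "invertible A"
  shows "\<exists>R. \<forall>m. norm (A *v of_int_vec m) \<le> D \<longrightarrow> m \<in> cube R"
proof -
  obtain A' :: "real^'n^'n" where A': "A' ** A = mat 1" using assms unfolding invertible_def by blast
  have "bounded_linear ((*v) A')" by simp
  then obtain C where C: "C > 0" "\<And>x. norm (A' *v x) \<le> norm x * C"
    using bounded_linear.pos_bounded by blast
  have "m \<in> cube (nat \<lceil>D * C\<rceil>)" if m: "norm (A *v of_int_vec m) \<le> D" for m
  proof -
    have "\<bar>m$i\<bar> \<le> int (nat \<lceil>D * C\<rceil>)" for i
    proof -
      have "\<bar>real_of_int (m$i)\<bar> \<le> norm (of_int_vec m)"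
        using component_le_norm_cart[of "of_int_vec m" i] by (simp add: of_int_vec_def)
      also have "\<dots> = norm (A' *v (A *v of_int_vec m))" by (simp add: matrix_vector_mul_assoc A')
      also have "\<dots> \<le> norm (A *v of_int_vec m) * C" by (rule C(2))
      also have "\<dots> \<le> D * C" using m C(1) by (simp add: mult_right_mono)
      also have "\<dots> \<le> real (nat \<lceil>D * C\<rceil>)" by (rule real_nat_ceiling_ge)
      finally have "real_of_int \<bar>m$i\<bar> \<le> real_of_int (int (nat \<lceil>D * C\<rceil>))"
        by (simp only: of_int_abs of_int_of_nat_eq)
      then show ?thesis by (simp only: of_int_le_iff)
    qed
    then show ?thesis by (simp add: cube_def)
  qed
  then show ?thesis by blast
qed

lemma infsum_eq_sum_Int:
  fixes g :: "'a \<Rightarrow> real"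
  assumes "finite T" and "\<And>x. x \<in> S \<Longrightarrow> x \<notin> T \<Longrightarrow> g x = 0"
  shows "infsum g S = sum g (S \<inter> T)"
proof -
  have "infsum g S = infsum g (S \<inter> T)"
    by (rule infsum_cong_neutral) (use assms in auto)
  then show ?thesis using assms by simp
qed

lemma frame_forE:
  assumes "frame_for g I S"
  obtains b where "b > 0" "\<And>h. h \<in> S \<Longrightarrow> b * (l2norm h)\<^sup>2 \<le> (\<Sum>\<^sub>\<infinity>k\<in>I. (cmod (l2ip h (g k)))\<^sup>2)"
  using assms unfolding frame_for_def by blast

locale compact_translates =
  fixes A :: "real^'n^'n" and f :: "real^'n \<Rightarrow> complex" and K :: "(real^'n) set"
  assumes invertible: "invertible A" and f_L2: "f \<in> L2" and compact: "compact K"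
    and vanishes_outside: "AE x in lborel. x \<notin> K \<longrightarrow> f x = 0"
    and nonzero: "\<not> (AE x in lborel. f x = 0)"
begin

definition shifts :: "int^'n \<Rightarrow> real^'n \<Rightarrow> complex" where
  "shifts k = transl (A *v of_int_vec k) f"

definition gram :: "int^'n \<Rightarrow> complex" where
  "gram m = l2ip (shifts m) f"

lemma f_measurable [measurable]: "f \<in> borel_measurable borel"
  by (rule L2_measurable[OF f_L2])

lemma K_borel [measurable]: "K \<in> sets borel"
  using compact_imp_closed[OF compact] by (rule borel_closed)

lemma shifts_L2: "shifts k \<in> L2"
  unfolding shifts_def by (rule L2_transl[OF f_L2])

lemma shifts_zero [simp]: "shifts 0 = f"
  by (simp add: shifts_def transl_def)

lemma l2norm_shifts: "(l2norm (shifts k))\<^sup>2 = (l2norm f)\<^sup>2"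
proof -
  have "(l2norm (shifts k))\<^sup>2 = (LINT x|lborel. (cmod (shifts k x))\<^sup>2)"
    by (rule l2norm_squared[OF shifts_L2])
  also have "\<dots> = (LINT x|lborel. (cmod (f (- (A *v of_int_vec k) + x)))\<^sup>2)"
    by (simp add: shifts_def transl_def)
  also have "\<dots> = (LINT x|lborel. (cmod (f x))\<^sup>2)" by (rule lborel_integral_translate) measurable
  finally show ?thesis by (simp add: l2norm_squared[OF f_L2])
qed

lemma l2ip_shifts: "l2ip (shifts j) (shifts k) = gram (j - k)"
  unfolding gram_def shifts_def
  by (simp add: l2ip_transl_transl[OF f_L2] of_int_vec_diff matrix_vector_mult_diff_distrib)

lemma gram_hermitian: "gram (- m) = cnj (gram m)"
  using l2ip_shifts[of 0 m] by (simp add: gram_def cnj_l2ip)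

lemma gram_zero: "gram 0 = complex_of_real ((l2norm f)\<^sup>2)"
  by (simp add: gram_def l2ip_self[OF f_L2])

lemma l2norm_f_pos: "(l2norm f)\<^sup>2 > 0"
proof -
  have "(LINT x|lborel. (cmod (f x))\<^sup>2) \<noteq> 0"
    using integral_nonneg_eq_0_iff_AE[OF L2_integrable[OF f_L2]] nonzero by simp
  then show ?thesis by (simp add: l2norm_squared[OF f_L2] order_less_le)
qed

lemma exists_radius: "\<exists>R. \<forall>y\<in>K. \<forall>m. y + A *v of_int_vec m \<in> K \<longrightarrow> m \<in> cube R"
proof -
  obtain b where b: "\<And>x. x \<in> K \<Longrightarrow> norm x \<le> b"
    using compact_imp_bounded[OF compact] unfolding bounded_iff by blast
  obtain R where R: "\<And>m. norm (A *v of_int_vec m) \<le> 2 * b \<Longrightarrow> m \<in> cube R"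
    using invertible_imp_lattice_ball_in_cube[OF invertible, of "2 * b"] by blast
  have "m \<in> cube R" if "y \<in> K" "y + A *v of_int_vec m \<in> K" for y m
    using norm_triangle_ineq4[of "y + A *v of_int_vec m" y] b[OF that(1)] b[OF that(2)]
    by (intro R) simp
  then show ?thesis by blast
qed

definition radius :: nat where
  "radius = (SOME R. \<forall>y\<in>K. \<forall>m. y + A *v of_int_vec m \<in> K \<longrightarrow> m \<in> cube R)"

lemma in_cube_radius: "y \<in> K \<Longrightarrow> y + A *v of_int_vec m \<in> K \<Longrightarrow> m \<in> cube radius"
  using someI_ex[OF exists_radius] unfolding radius_def by blast

lemma AE_translate_vanishes: "AE x in lborel. x - w \<notin> K \<longrightarrow> f (x - w) = 0"
proof -
  have "AE x in lborel. (- w + x) \<notin> K \<longrightarrow> f (- w + x) = 0"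
    by (rule AE_lborel_translate[OF _ vanishes_outside]) measurable
  then show ?thesis by simp
qed

lemma gram_outside_cube: "m \<notin> cube radius \<Longrightarrow> gram m = 0"
proof -
  assume m: "m \<notin> cube radius"
  define w where "w = A *v of_int_vec m"
  have "AE x in lborel. f (x - w) * cnj (f x) = 0"
    using vanishes_outside AE_translate_vanishes[of w]
  proof eventually_elim
    case (elim x)
    have "\<not> (x - w \<in> K \<and> (x - w) + w \<in> K)"
      using in_cube_radius[of "x - w" m] m by (auto simp: w_def)
    with elim show ?case by auto
  qed
  then have "(LINT x|lborel. f (x - w) * cnj (f x)) = 0" by (rule integral_eq_zero_AE)
  then show ?thesis by (simp add: gram_def l2ip_def shifts_def transl_def w_def)
qed


definition shifted_support :: "int^'n \<Rightarrow> (real^'n) set" where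
  "shifted_support k = {x. x - A *v of_int_vec k \<in> K}"

lemma shifted_support_borel [measurable]: "shifted_support k \<in> sets borel"
  unfolding shifted_support_def by measurable

lemma norm_l2ip_shifts_le:
  assumes h: "h \<in> L2"
  shows "(cmod (l2ip h (shifts k)))\<^sup>2 \<le> (l2norm f)\<^sup>2 * (LINT x|lborel. (cmod (h x))\<^sup>2 * indicator (shifted_support k) x)"
proof -
  have [measurable]: "h \<in> borel_measurable borel" using L2_measurable[OF h] .
  define hk where "hk x = h x * indicator (shifted_support k) x" for x
  have [measurable]: "hk \<in> borel_measurable borel" unfolding hk_def by measurable
  have "integrable lborel (\<lambda>x. (cmod (hk x))\<^sup>2)"
  proof (rule Bochner_Integration.integrable_bound[OF L2_integrable[OF h]])
    show "AE x in lborel. norm ((cmod (hk x))\<^sup>2) \<le> norm ((cmod (h x))\<^sup>2)"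
      by (rule AE_I2) (simp add: hk_def indicator_def)
  qed measurable
  then have hk: "hk \<in> L2" by (simp add: L2_def)
  have "l2ip h (shifts k) = l2ip hk (shifts k)"
    unfolding l2ip_def
  proof (rule integral_cong_AE)
    show "AE x in lborel. h x * cnj (shifts k x) = hk x * cnj (shifts k x)"
      using AE_translate_vanishes[of "A *v of_int_vec k"]
      by eventually_elim (auto simp: hk_def shifts_def transl_def shifted_support_def)
  qed (simp_all add: shifts_def transl_def)
  then have "(cmod (l2ip h (shifts k)))\<^sup>2 \<le> (l2norm hk)\<^sup>2 * (l2norm (shifts k))\<^sup>2"
    by (simp add: l2ip_Cauchy_Schwarz[OF hk shifts_L2])
  also have "(l2norm hk)\<^sup>2 = (LINT x|lborel. (cmod (h x))\<^sup>2 * indicator (shifted_support k) x)"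
    unfolding l2norm_squared[OF hk] by (rule Bochner_Integration.integral_cong) (auto simp: hk_def indicator_def)
  finally show ?thesis by (simp add: l2norm_shifts mult.commute)
qed

lemma sum_indicator_shifted_support_le:
  assumes F: "finite F"
  shows "(\<Sum>k\<in>F. indicator (shifted_support k) x) \<le> real (card (cube radius :: (int^'n) set))"
proof (cases "\<exists>k1\<in>F. x \<in> shifted_support k1")
  case True
  then obtain k1 where k1: "k1 \<in> F" "x \<in> shifted_support k1" by blast
  let ?S = "{k\<in>F. x \<in> shifted_support k}"
  have "?S \<subseteq> (\<lambda>m. k1 + m) ` cube radius"
  proof
    fix k assume k: "k \<in> ?S"
    have "x - A *v of_int_vec k \<in> K" "x - A *v of_int_vec k1 \<in> K"
      using k k1 by (auto simp: shifted_support_def)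
    moreover have "x - A *v of_int_vec k + A *v of_int_vec (k - k1) = x - A *v of_int_vec k1"
      by (simp add: of_int_vec_diff matrix_vector_mult_diff_distrib)
    ultimately have "k - k1 \<in> cube radius" by (metis in_cube_radius)
    then show "k \<in> (\<lambda>m. k1 + m) ` cube radius" by (rule image_eqI[rotated]) simp
  qed
  then have "card ?S \<le> card (cube radius :: (int^'n) set)"
    by (meson card_image_le card_mono finite_cube finite_imageI order_trans)
  moreover have "(\<Sum>k\<in>F. indicator (shifted_support k) x) = real (card ?S)"
    using F by (simp add: indicator_def sum.If_cases Int_def)
  ultimately show ?thesis by simp
qed (simp add: indicator_def)

lemma sum_norm_l2ip_shifts_le:
  assumes h: "h \<in> L2" and F: "finite F"
  shows "(\<Sum>k\<in>F. (cmod (l2ip h (shifts k)))\<^sup>2)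
       \<le> (l2norm f)\<^sup>2 * real (card (cube radius :: (int^'n) set)) * (l2norm h)\<^sup>2"
proof -
  have [measurable]: "h \<in> borel_measurable borel" using L2_measurable[OF h] .
  let ?C = "real (card (cube radius :: (int^'n) set))"
  let ?w = "\<lambda>k x. (cmod (h x))\<^sup>2 * indicator (shifted_support k) x"
  have int: "integrable lborel (?w k)" for k
    using integrable_mult_indicator[OF _ L2_integrable[OF h], of "shifted_support k"]
    by (simp add: mult.commute)
  have "(\<Sum>k\<in>F. (cmod (l2ip h (shifts k)))\<^sup>2) \<le> (\<Sum>k\<in>F. (l2norm f)\<^sup>2 * (LINT x|lborel. ?w k x))"
    by (intro sum_mono norm_l2ip_shifts_le h)
  also have "\<dots> = (l2norm f)\<^sup>2 * (LINT x|lborel. (cmod (h x))\<^sup>2 * (\<Sum>k\<in>F. indicator (shifted_support k) x))"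
    by (simp add: sum_distrib_left[symmetric] Bochner_Integration.integral_sum[symmetric] int)
  also have "\<dots> \<le> (l2norm f)\<^sup>2 * (LINT x|lborel. (cmod (h x))\<^sup>2 * ?C)"
    using int L2_integrable[OF h]
    by (intro mult_left_mono integral_mono mult_left_mono sum_indicator_shifted_support_le F)
      (auto simp: sum_distrib_left)
  finally show ?thesis by (simp add: l2norm_squared[OF h] mult_ac)
qed

lemma bessel_seq_shifts: "bessel_seq shifts UNIV"
  unfolding bessel_seq_def
proof (intro conjI ballI exI shifts_L2)
  fix h :: "real^'n \<Rightarrow> complex" assume h: "h \<in> L2"
  let ?B = "(l2norm f)\<^sup>2 * real (card (cube radius :: (int^'n) set))"
  show sm: "(\<lambda>k. (cmod (l2ip h (shifts k)))\<^sup>2) summable_on UNIV"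
    by (rule nonneg_bdd_above_summable_on)
      (auto intro!: bdd_aboveI[where M="?B * (l2norm h)\<^sup>2"] sum_norm_l2ip_shifts_le[OF h])
  show "(\<Sum>\<^sub>\<infinity>k\<in>UNIV. (cmod (l2ip h (shifts k)))\<^sup>2) \<le> ?B * (l2norm h)\<^sup>2"
    by (rule infsum_le_finite_sums[OF sm]) (rule sum_norm_l2ip_shifts_le[OF h])
qed


definition lincomb :: "(int^'n) set \<Rightarrow> (int^'n \<Rightarrow> complex) \<Rightarrow> real^'n \<Rightarrow> complex" where
  "lincomb F c = (\<lambda>x. \<Sum>j\<in>F. c j * shifts j x)"

lemma lincomb_L2: "finite F \<Longrightarrow> lincomb F c \<in> L2"
  unfolding lincomb_def by (rule L2_sum) (auto intro: shifts_L2)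

lemma l2ip_lincomb_shifts: "finite F \<Longrightarrow> l2ip (lincomb F c) (shifts k) = gram_apply F c gram k"
  unfolding lincomb_def gram_apply_def by (simp add: l2ip_sum_left shifts_L2 l2ip_shifts)

lemma l2norm_lincomb: "finite F \<Longrightarrow> (l2norm (lincomb F c))\<^sup>2 = Re (gram_form F c gram)"
proof -
  assume F: "finite F"
  have "complex_of_real ((l2norm (lincomb F c))\<^sup>2) = l2ip (lincomb F c) (lincomb F c)"
    by (rule l2ip_self[OF lincomb_L2[OF F], symmetric])
  also have "\<dots> = (\<Sum>k\<in>F. cnj (c k) * l2ip (lincomb F c) (shifts k))"
    by (subst (2) lincomb_def) (rule l2ip_sum_right[OF F shifts_L2 lincomb_L2[OF F]])
  also have "\<dots> = gram_form F c gram"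
    by (simp add: l2ip_lincomb_shifts[OF F] gram_form_eq_sum_gram_apply)
  finally show ?thesis by (metis Re_complex_of_real)
qed

lemma lincomb_in_closed_span: "finite F \<Longrightarrow> lincomb F c \<in> closed_span shifts UNIV"
  unfolding closed_span_def
  by (auto simp: lincomb_L2 intro!: exI[of _ F] exI[of _ c]) (simp add: lincomb_def l2norm_def)

lemma infsum_l2ip_lincomb:
  assumes F: "F \<subseteq> cube N"
  shows "(\<Sum>\<^sub>\<infinity>k\<in>S. (cmod (l2ip (lincomb F c) (shifts k)))\<^sup>2)
       = (\<Sum>k\<in>S \<inter> cube (N + radius). (cmod (gram_apply F c gram k))\<^sup>2)"
proof -
  have "finite F" using finite_subset[OF F finite_cube] .
  then show ?thesis
    unfolding l2ip_lincomb_shifts[OF \<open>finite F\<close>]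
    by (intro infsum_eq_sum_Int) (auto simp: gram_apply_outside_cube[OF F gram_outside_cube])
qed


subsection \<open>A frame sequence has a symbol bounded away from zero\<close>

definition gram_symbol :: "real^'n \<Rightarrow> real" where
  "gram_symbol x = Re (symbol radius gram x)"

definition gram_l1 :: real where
  "gram_l1 = (\<Sum>m\<in>cube radius. cmod (gram m))"

lemma gram_symbol_le_l1: "gram_symbol x \<le> gram_l1"
  unfolding gram_symbol_def gram_l1_def by (rule symbol_le_l1_norm)

lemma contraction_ratio:
  assumes "b > 0" and "\<And>x. b \<le> gram_symbol x"
  shows "0 \<le> 1 - b / gram_l1" and "1 - b / gram_l1 < 1"
proof -
  have "b \<le> gram_l1" using assms(2)[of 0] gram_symbol_le_l1[of 0] by linarith
  with assms(1) show "0 \<le> 1 - b / gram_l1" "1 - b / gram_l1 < 1" by simp_all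
qed

lemma gram_symbol_pos: "\<exists>x. gram_symbol x > 0"
proof (rule ccontr)
  assume "\<not> (\<exists>x. gram_symbol x > 0)"
  then have "\<And>x. Re (symbol radius gram x) \<le> 0" by (simp add: gram_symbol_def not_less)
  then have "Re (gram_form {0} (\<lambda>_. 1) gram) \<le> 0"
    using gram_form_bounds(2)[where a=gram and R=radius and F="{0}" and c="\<lambda>_. 1" and hi=0,
        OF gram_outside_cube gram_hermitian]
    by simp
  moreover have "Re (gram_form {0} (\<lambda>_. 1) gram) > 0"
    using gram_zero l2norm_f_pos by (simp add: gram_form_def)
  ultimately show False by simp
qed

lemma frame_seq_imp_gram_symbol_ge:
  assumes "frame_seq shifts UNIV"
  obtains b where "b > 0" "\<And>x. b \<le> gram_symbol x"
proof -
  obtain b where b: "b > 0" and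
    frame: "\<And>h. h \<in> closed_span shifts UNIV \<Longrightarrow> b * (l2norm h)\<^sup>2 \<le> (\<Sum>\<^sub>\<infinity>k\<in>UNIV. (cmod (l2ip h (shifts k)))\<^sup>2)"
    using assms unfolding frame_seq_def by (auto elim: frame_forE)
  have "b * Re (gram_form (cube N) c gram)
      \<le> (\<Sum>k\<in>cube (N + radius). (cmod (gram_apply (cube N) c gram k))\<^sup>2)" for N c
    using frame[OF lincomb_in_closed_span[OF finite_cube, of N c]]
    by (simp add: l2norm_lincomb infsum_l2ip_lincomb[OF order_refl])
  then have "b * gram_symbol x \<le> (gram_symbol x)\<^sup>2" for x
    unfolding gram_symbol_def using b
    by (intro frame_ineq_imp_symbol_gap[where a=gram and R=radius, OF gram_outside_cube gram_hermitian]) auto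
  then have "b \<le> gram_symbol x" for x
    using continuous_on_symbol b gram_symbol_pos
    by (intro continuous_gap_imp_lower_bound[of gram_symbol]) (auto simp: gram_symbol_def)
  with b that show ?thesis by blast
qed

lemma riesz_seq_shifts:
  assumes b: "b > 0" and lo: "\<And>x. b \<le> gram_symbol x"
  shows "riesz_seq shifts UNIV"
proof -
  have "b * (\<Sum>k\<in>F. (cmod (c k))\<^sup>2) \<le> (l2norm (lincomb F c))\<^sup>2 \<and>
        (l2norm (lincomb F c))\<^sup>2 \<le> gram_l1 * (\<Sum>k\<in>F. (cmod (c k))\<^sup>2)" if "finite F" for F c
    using gram_form_bounds(1)[where a=gram and R=radius and c=c,
        OF gram_outside_cube gram_hermitian that lo[unfolded gram_symbol_def]]
      gram_form_bounds(2)[where a=gram and R=radius and c=c,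
        OF gram_outside_cube gram_hermitian that gram_symbol_le_l1[unfolded gram_symbol_def]]
    by (simp add: l2norm_lincomb that)
  moreover have "gram_l1 > 0" using b lo[of 0] gram_symbol_le_l1[of 0] by linarith
  ultimately show ?thesis
    unfolding riesz_seq_def lincomb_def[symmetric] using b shifts_L2 by blast
qed


subsection \<open>Deleting a translate destroys the frame property\<close>

text \<open>With \<open>G\<close> the Gram matrix and \<open>S = gram_l1\<close> a bound for the symbol, \<open>q = 1 - b/S < 1\<close> and
  \<open>c = S\<^sup>-\<^sup>1 \<Sum>\<^sub>n\<^sub><\<^sub>M (I - G/S)\<^sup>n \<delta>\<^sub>j\<^sub>0\<close> satisfies \<open>G c = \<delta>\<^sub>j\<^sub>0 - (I - G/S)\<^sup>M \<delta>\<^sub>j\<^sub>0\<close>: the combination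
  \<open>h = \<Sum> c\<^sub>k g\<^sub>k\<close> is almost orthogonal to every translate except \<open>g\<^sub>j\<^sub>0\<close>.\<close>

lemma lincomb_nearly_biorthogonal:
  assumes F: "F \<subseteq> cube N" and r: "\<And>k. k \<notin> F \<Longrightarrow> r k = 0"
    and G: "\<And>k. gram_apply F c gram k = (if k = j0 then 1 else 0) - r k"
  shows "(\<Sum>\<^sub>\<infinity>k\<in>UNIV - {j0}. (cmod (l2ip (lincomb F c) (shifts k)))\<^sup>2) \<le> (\<Sum>k\<in>F. (cmod (r k))\<^sup>2)"
    and "1 - cmod (r j0) \<le> cmod (l2ip (lincomb F c) (shifts j0))"
proof -
  have finite: "finite F" using finite_subset[OF F finite_cube] .
  have "F \<subseteq> cube (N + radius)" using F cube_mono[of N "N + radius"] by auto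
  then have "(\<Sum>k\<in>cube (N + radius). (cmod (r k))\<^sup>2) = (\<Sum>k\<in>F. (cmod (r k))\<^sup>2)"
    by (intro sum.mono_neutral_right) (auto simp: r)
  moreover have "(\<Sum>\<^sub>\<infinity>k\<in>UNIV - {j0}. (cmod (l2ip (lincomb F c) (shifts k)))\<^sup>2)
      = (\<Sum>k\<in>(UNIV - {j0}) \<inter> cube (N + radius). (cmod (r k))\<^sup>2)"
    unfolding infsum_l2ip_lincomb[OF F] by (intro sum.cong refl) (auto simp: G)
  moreover have "\<dots> \<le> (\<Sum>k\<in>cube (N + radius). (cmod (r k))\<^sup>2)"
    by (intro sum_mono2) auto
  ultimately show "(\<Sum>\<^sub>\<infinity>k\<in>UNIV - {j0}. (cmod (l2ip (lincomb F c) (shifts k)))\<^sup>2) \<le> (\<Sum>k\<in>F. (cmod (r k))\<^sup>2)"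
    by linarith
  show "1 - cmod (r j0) \<le> cmod (l2ip (lincomb F c) (shifts j0))"
    using norm_triangle_ineq2[of 1 "r j0"] by (simp add: l2ip_lincomb_shifts[OF finite] G)
qed

lemma neumann_lincomb:
  assumes b: "b > 0" and lo: "\<And>x. b \<le> gram_symbol x"
  defines "q \<equiv> 1 - b / gram_l1"
  obtains h where "h \<in> closed_span shifts UNIV" "h \<in> L2"
    and "1 - q ^ M \<le> cmod (l2ip h (shifts j0))"
    and "(\<Sum>\<^sub>\<infinity>k\<in>UNIV - {j0}. (cmod (l2ip h (shifts k)))\<^sup>2) \<le> q ^ (2*M)"
proof -
  obtain N0 where "{j0} \<subseteq> cube N0" using finite_subset_cube[of "{j0}"] by blast
  then have j0: "j0 \<in> cube N0" by simp
  let ?r = "neumann gram radius gram_l1 N0 j0 M"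
  define F :: "(int^'n) set" where "F = cube (N0 + M * radius)"
  define c where "c k = (\<Sum>n<M. neumann gram radius gram_l1 N0 j0 n k) / complex_of_real gram_l1" for k
  have G: "gram_apply F c gram k = (if k = j0 then 1 else 0) - ?r k" for k
    unfolding F_def c_def
    by (rule gram_apply_neumann_sum[where a=gram and R=radius, OF gram_outside_cube j0])
  have r: "?r k = 0" if "k \<notin> F" for k
    using that neumann_outside_cube[where a=gram and R=radius, OF gram_outside_cube j0] by (simp add: F_def)
  have F: "F \<subseteq> cube (N0 + M * radius)" by (simp add: F_def)
  note biorth = lincomb_nearly_biorthogonal[OF F r G]
  have small: "(\<Sum>k\<in>F. (cmod (?r k))\<^sup>2) \<le> q ^ (2*M)"
    unfolding F_def q_def
    by (rule sum_norm_neumann_le[where a=gram and R=radius, OF gram_outside_cube gram_hermitian j0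
          lo[unfolded gram_symbol_def] gram_symbol_le_l1[unfolded gram_symbol_def] b])
  have "j0 \<in> F" using j0 cube_mono[of N0 "N0 + M * radius"] by (auto simp: F_def)
  then have "(cmod (?r j0))\<^sup>2 \<le> (\<Sum>k\<in>F. (cmod (?r k))\<^sup>2)"
    by (rule member_le_sum) (simp_all add: F_def)
  also have "\<dots> \<le> (q ^ M)\<^sup>2"
    using small by (simp only: power_even_eq)
  finally have "(cmod (?r j0))\<^sup>2 \<le> (q ^ M)\<^sup>2" .
  moreover have "q \<ge> 0" unfolding q_def by (rule contraction_ratio(1)[OF b lo])
  ultimately have "cmod (?r j0) \<le> q ^ M" by (meson power2_le_imp_le zero_le_power)
  have "lincomb F c \<in> closed_span shifts UNIV" "lincomb F c \<in> L2"
    by (simp_all add: F_def lincomb_in_closed_span lincomb_L2)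
  moreover have "1 - q ^ M \<le> cmod (l2ip (lincomb F c) (shifts j0))"
    using biorth(2) \<open>cmod (?r j0) \<le> q ^ M\<close> by linarith
  moreover have "(\<Sum>\<^sub>\<infinity>k\<in>UNIV - {j0}. (cmod (l2ip (lincomb F c) (shifts k)))\<^sup>2) \<le> q ^ (2*M)"
    using biorth(1) small by linarith
  ultimately show ?thesis by (rule that)
qed

lemma not_frame_for_delete:
  assumes b: "b > 0" and lo: "\<And>x. b \<le> gram_symbol x"
  shows "\<not> frame_for shifts (UNIV - {j0}) (closed_span shifts UNIV)"
proof
  assume "frame_for shifts (UNIV - {j0}) (closed_span shifts UNIV)"
  then obtain b' where b': "b' > 0" and frame: "\<And>h. h \<in> closed_span shifts UNIV \<Longrightarrow>
      b' * (l2norm h)\<^sup>2 \<le> (\<Sum>\<^sub>\<infinity>k\<in>UNIV - {j0}. (cmod (l2ip h (shifts k)))\<^sup>2)"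
    by (elim frame_forE) blast
  define q where "q = 1 - b / gram_l1"
  have q: "0 \<le> q" "q < 1" unfolding q_def by (rule contraction_ratio[OF b lo])+
  define \<phi> where "\<phi> M = b' * (1 - q ^ M)\<^sup>2 - (l2norm f)\<^sup>2 * (q ^ M)\<^sup>2" for M
  have "\<phi> \<longlonglongrightarrow> b'"
    unfolding \<phi>_def using q by (auto intro!: tendsto_eq_intros LIMSEQ_power_zero)
  from order_tendstoD(1)[OF this b'] obtain M where M: "\<phi> M > 0"
    by (auto simp: eventually_sequentially)
  obtain h where h: "h \<in> closed_span shifts UNIV" "h \<in> L2"
    and near: "1 - q ^ M \<le> cmod (l2ip h (shifts j0))"
    and far: "(\<Sum>\<^sub>\<infinity>k\<in>UNIV - {j0}. (cmod (l2ip h (shifts k)))\<^sup>2) \<le> q ^ (2*M)"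
    using neumann_lincomb[OF b lo, of M j0] unfolding q_def by blast
  have "(1 - q ^ M)\<^sup>2 \<le> (cmod (l2ip h (shifts j0)))\<^sup>2"
    using near q by (intro power_mono) (auto simp: power_le_one)
  also have "\<dots> \<le> (l2norm h)\<^sup>2 * (l2norm f)\<^sup>2"
    using l2ip_Cauchy_Schwarz[OF h(2) shifts_L2, of j0] by (simp add: l2norm_shifts)
  finally have "b' * (1 - q ^ M)\<^sup>2 \<le> (l2norm f)\<^sup>2 * (b' * (l2norm h)\<^sup>2)"
    using b' by (simp add: mult_left_mono mult_ac)
  also have "\<dots> \<le> (l2norm f)\<^sup>2 * (q ^ M)\<^sup>2"
    using frame[OF h(1)] far by (intro mult_left_mono) (simp_all add: power_even_eq)
  finally show False using M by (simp add: \<phi>_def)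
qed

end

theorem mainTheorem11:
  fixes A :: "real^'n^'n" and f :: "real^'n \<Rightarrow> complex"
  assumes "invertible A"
    and "f \<in> L2"
    and "\<exists>K. compact K \<and> (AE x in lborel. x \<notin> K \<longrightarrow> f x = 0)"
    and "\<not> (AE x in lborel. f x = 0)"
  defines "g \<equiv> (\<lambda>k::int^'n. transl (A *v (\<chi> i. real_of_int (k $ i))) f)"
  shows "bessel_seq g UNIV \<and>
         \<not> overcomplete_frame_seq g UNIV \<and>
         (frame_seq g UNIV \<longrightarrow> riesz_seq g UNIV)"
proof -
  obtain K where K: "compact K" "AE x in lborel. x \<notin> K \<longrightarrow> f x = 0" using assms(3) by blast
  interpret compact_translates A f K using assms(1,2,4) K by unfold_locales auto
  have g: "g = shifts" unfolding g_def by (rule ext) (simp add: shifts_def of_int_vec_def)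
  have "riesz_seq g UNIV \<and> \<not> frame_for g (UNIV - {j}) (closed_span g UNIV)"
    if frame: "frame_seq g UNIV" for j
  proof -
    obtain b where "b > 0" "\<And>x. b \<le> gram_symbol x"
      using frame_seq_imp_gram_symbol_ge frame unfolding g by blast
    then show ?thesis unfolding g using riesz_seq_shifts not_frame_for_delete by blast
  qed
  then show ?thesis unfolding overcomplete_frame_seq_def using bessel_seq_shifts g by blast
qed

end
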